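(* Let $d\in\{3,4\}$ and let $g$ satisfy the assumptions listed in the context. Let $\omega_1>0$ and $\mu:(\omega_1,\infty)\to(0,\infty)$ be as in the context, and set $\kappa(\omega):=-\langle g(\mu(\omega)M_\omega W),\Lambda W\rangle$. Then $$\lim_{\omega\to\infty}\frac{\kappa(\omega)}{\{\mu(\omega)M_\omega\}^{p_2}}=-\frac{C_2}{p_2}\langle W^{p_2},\Lambda W\rangle .$$
   Context: Let $2^*=\frac{2d}{d-2}$. Assumptions on $g:\mathbb{C}\to\mathbb{C}$ (independent of $\omega$): (a) restriction to $(0,\infty)$ is real-valued and $C^2$, $g(0)=0$, $g(z)=\frac{z}{|z|}g(|z|)$ for $z\ne0$, $g'(t)t-g(t)\ge0$ for $t>0$; (b) there exist $\max\{\frac{2}{d-2},1\}<p_1<\frac{d+2}{d-2}$, $\max\{\frac{d+2}{d-2}-2,p_1\}<p_2<\frac{d+2}{d-2}$ and $C_1,C_2>0$ with $\limsup_{t\to0}|g'(t)|/t^{p_1-1}\le C_1$, $\lim_{t\to\infty}g'(t)/t^{p_2-1}=C_2$; (c) with $G(t)=\int_0^tg$, there is $C_3>0$ with $G(t)-\frac1{2^*}g(t)t\ge C_3t^{p_2+1}$ for $t\ge0$. For $\omega>0$, $\Phi_\omega$ is a ground state of $-\Delta u+\omega u-|u|^{\frac4{d-2}}u-g(u)=0$ (minimizer of $\mathcal S_\omega(u)=\frac12\|\nabla u\|_2^2+\frac\omega2\|u\|_2^2-\frac1{2^*}\|u\|_{2^*}^{2^*}-\int G(|u|)$ over $u\in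 H^1\setminus\{0\}$ with $\|\nabla u\|_2^2+\omega\|u\|_2^2-\|u\|_{2^*}^{2^*}-\int g(|u|)|u|=0$), chosen to solve the equation and be positive, radial, strictly decreasing in $|x|$; $M_\omega:=\Phi_\omega(0)$. $T_\lambda[v](x):=\lambda^{-1}v(\lambda^{-\frac2{d-2}}x)$, $\widetilde\Phi_\omega:=T_{M_\omega}[\Phi_\omega]$. $W(x)=(1+\frac{|x|^2}{d(d-2)})^{-\frac{d-2}{2}}$, $\Lambda W=\frac{d-2}2W+x\cdot\nabla W$, $V=-\frac{d+2}{d-2}W^{\frac4{d-2}}$, $\langle f,g\rangle=\operatorname{Re}\int f\bar g$. The pair $(\omega_1,\mu)$ is as produced by the following result of the paper: there exists $\omega_1>0$ and, for each $\omega>\omega_1$, $\mu(\omega)>0$ with $\mu(\omega)\to1$ as $\omega\to\infty$, such that with $s(\omega)=\{\mu(\omega)M_\omega\}^{-\frac4{d-2}}\omega$ and $\zeta_\omega=T_{\mu(\omega)}[\widetilde\Phi_\omega]-W$ one has $\langle\{1+(-\Delta+s(\omega))^{-1}V\}\zeta_\omega,V\Lambda W\rangle=0$, $\|\nabla\zeta_\omega\|_{L^2}\to0$ and $\|\zeta_\omega\|_{L^r}\to0$ for all $\frac d{d-2}<r<\infty$. *)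

theory Defs
  imports "HOL-Analysis.Analysis"
begin

definition dimR :: "'n::finite itself \<Rightarrow> real" where
  "dimR _ = real CARD('n)"

definition crit_exp :: "'n::finite itself \<Rightarrow> real" where
  "crit_exp n = 2 * dimR n / (dimR n - 2)"

definition partial :: "'n::finite \<Rightarrow> (real^'n \<Rightarrow> real) \<Rightarrow> real^'n \<Rightarrow> real" where
  "partial i f x = frechet_derivative f (at x) (axis i 1)"

fun iter_partial :: "'n::finite list \<Rightarrow> (real^'n \<Rightarrow> real) \<Rightarrow> real^'n \<Rightarrow> real" where
  "iter_partial [] f = f"
| "iter_partial (i # is) f = partial i (iter_partial is f)"

definition smooth_fun :: "(real^'n::finite \<Rightarrow> real) \<Rightarrow> bool" where
  "smooth_fun f \<longleftrightarrow> (\<forall>is. continuous_on UNIV (iter_partial is f)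
                        \<and> (\<forall>x. iter_partial is f differentiable (at x)))"

definition test_fun :: "(real^'n::finite \<Rightarrow> real) \<Rightarrow> bool" where
  "test_fun \<phi> \<longleftrightarrow> smooth_fun \<phi> \<and> (\<exists>R. \<forall>x. R < norm x \<longrightarrow> \<phi> x = 0)"

definition weak_grad :: "(real^'n::finite \<Rightarrow> complex) \<Rightarrow> (real^'n \<Rightarrow> complex^'n) \<Rightarrow> bool" where
  "weak_grad u Du \<longleftrightarrow> u \<in> borel_measurable lborel \<and> Du \<in> borel_measurable lborel \<and>
     (\<forall>\<phi> i. test_fun \<phi> \<longrightarrow>
        integrable lborel (\<lambda>x. u x * of_real (partial i \<phi> x)) \<and>
        integrable lborel (\<lambda>x. Du x $ i * of_real (\<phi> x)) \<and>
        (\<integral>x. u x * of_real (partial i \<phi> x) \<partial>lborel) = - (\<integral>x. Du x $ i * of_real (\<phi> x) \<partial>lborel))"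

definition has_weak_grad :: "(real^'n::finite \<Rightarrow> complex) \<Rightarrow> bool" where
  "has_weak_grad u \<longleftrightarrow> (\<exists>Du. weak_grad u Du)"

definition grad :: "(real^'n::finite \<Rightarrow> complex) \<Rightarrow> real^'n \<Rightarrow> complex^'n" where
  "grad u = (SOME Du. weak_grad u Du)"

text \<open>L^p norms (p>0), valued in ennreal so that they are infinite outside L^p.\<close>
definition Lp_norm_pow :: "real \<Rightarrow> (real^'n::finite \<Rightarrow> complex) \<Rightarrow> ennreal" where
  "Lp_norm_pow p u = (\<integral>\<^sup>+ x. ennreal (cmod (u x) powr p) \<partial>lborel)"

definition in_Lp :: "real \<Rightarrow> (real^'n::finite \<Rightarrow> complex) \<Rightarrow> bool" where
  "in_Lp p u \<longleftrightarrow> u \<in> borel_measurable lborel \<and> integrable lborel (\<lambda>x. cmod (u x) powr p)"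

text \<open>\<open>\<parallel>\<nabla>u\<parallel>_2^2\<close> as an ennreal (infinite unless |\<nabla>u| \<in> L^2).\<close>
definition grad_norm2_enn :: "(real^'n::finite \<Rightarrow> complex) \<Rightarrow> ennreal" where
  "grad_norm2_enn u = (\<integral>\<^sup>+ x. ennreal (\<Sum>i\<in>UNIV. (cmod (grad u x $ i))\<^sup>2) \<partial>lborel)"

definition grad_norm2 :: "(real^'n::finite \<Rightarrow> complex) \<Rightarrow> real" where
  "grad_norm2 u = (\<integral>x. (\<Sum>i\<in>UNIV. (cmod (grad u x $ i))\<^sup>2) \<partial>lborel)"

definition H1 :: "(real^'n::finite \<Rightarrow> complex) set" where
  "H1 = {u. in_Lp 2 u \<and> has_weak_grad u \<and> grad_norm2_enn u < \<infinity>}"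

definition rinner :: "(real^'n::finite \<Rightarrow> complex) \<Rightarrow> (real^'n \<Rightarrow> complex) \<Rightarrow> real" where
  "rinner f g = Re (\<integral>x. f x * cnj (g x) \<partial>lborel)"

definition g_real :: "(complex \<Rightarrow> complex) \<Rightarrow> real \<Rightarrow> real" where
  "g_real g t = Re (g (complex_of_real t))"

definition G_prim :: "(complex \<Rightarrow> complex) \<Rightarrow> real \<Rightarrow> real" where
  "G_prim g t = integral {0..t} (g_real g)"

definition assumptions_g ::
  "'n::finite itself \<Rightarrow> (complex \<Rightarrow> complex) \<Rightarrow> real \<Rightarrow> real \<Rightarrow> real \<Rightarrow> real \<Rightarrow> real \<Rightarrow> bool" where
  "assumptions_g n g p1 p2 C1 C2 C3 \<longleftrightarrow>
    (let d = dimR n; gr = g_real g; g' = deriv gr in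
    \<comment> \<open>(a)\<close>
    (\<forall>t>0. g (complex_of_real t) \<in> \<real>) \<and>
    (\<forall>t>0. gr differentiable (at t) \<and> deriv gr differentiable (at t)) \<and>
    continuous_on {0<..} (deriv (deriv gr)) \<and>
    g 0 = 0 \<and>
    (\<forall>z. z \<noteq> 0 \<longrightarrow> g z = z / complex_of_real (cmod z) * g (complex_of_real (cmod z))) \<and>
    (\<forall>t>0. g' t * t - gr t \<ge> 0) \<and>
    \<comment> \<open>(b)\<close>
    max (2 / (d - 2)) 1 < p1 \<and> p1 < (d + 2) / (d - 2) \<and>
    max ((d + 2) / (d - 2) - 2) p1 < p2 \<and> p2 < (d + 2) / (d - 2) \<and>
    C1 > 0 \<and> C2 > 0 \<and>
    Limsup (at_right 0) (\<lambda>t. ereal (\<bar>g' t\<bar> / t powr (p1 - 1))) \<le> ereal C1 \<and>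
    ((\<lambda>t. g' t / t powr (p2 - 1)) \<longlongrightarrow> C2) at_top \<and>
    \<comment> \<open>(c)\<close>
    C3 > 0 \<and>
    (\<forall>t\<ge>0. G_prim g t - gr t * t / crit_exp n \<ge> C3 * t powr (p2 + 1)))"

definition action :: "'n::finite itself \<Rightarrow> (complex \<Rightarrow> complex) \<Rightarrow> real \<Rightarrow> (real^'n \<Rightarrow> complex) \<Rightarrow> real" where
  "action n g \<omega> u = grad_norm2 u / 2 + \<omega> / 2 * (\<integral>x. (cmod (u x))\<^sup>2 \<partial>lborel)
     - (\<integral>x. cmod (u x) powr crit_exp n \<partial>lborel) / crit_exp n
     - (\<integral>x. G_prim g (cmod (u x)) \<partial>lborel)"

definition nehari :: "'n::finite itself \<Rightarrow> (complex \<Rightarrow> complex) \<Rightarrow> real \<Rightarrow> (real^'n \<Rightarrow> complex) \<Rightarrow> real" where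
  "nehari n g \<omega> u = grad_norm2 u + \<omega> * (\<integral>x. (cmod (u x))\<^sup>2 \<partial>lborel)
     - (\<integral>x. cmod (u x) powr crit_exp n \<partial>lborel)
     - (\<integral>x. g_real g (cmod (u x)) * cmod (u x) \<partial>lborel)"

definition nehari_set :: "'n::finite itself \<Rightarrow> (complex \<Rightarrow> complex) \<Rightarrow> real \<Rightarrow> (real^'n \<Rightarrow> complex) set" where
  "nehari_set n g \<omega> = {u \<in> H1. \<not> (AE x in lborel. u x = 0) \<and> nehari n g \<omega> u = 0}"

definition ground_state :: "'n::finite itself \<Rightarrow> (complex \<Rightarrow> complex) \<Rightarrow> real \<Rightarrow> (real^'n \<Rightarrow> complex) \<Rightarrow> bool" where
  "ground_state n g \<omega> u \<longleftrightarrow> u \<in> nehari_set n g \<omega> \<and>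
     (\<forall>v \<in> nehari_set n g \<omega>. action n g \<omega> u \<le> action n g \<omega> v)"

definition weak_solution :: "'n::finite itself \<Rightarrow> (complex \<Rightarrow> complex) \<Rightarrow> real \<Rightarrow> (real^'n \<Rightarrow> complex) \<Rightarrow> bool" where
  "weak_solution n g \<omega> u \<longleftrightarrow> u \<in> H1 \<and>
     (\<forall>\<phi>. test_fun \<phi> \<longrightarrow>
       (\<integral>x. (\<Sum>i\<in>UNIV. grad u x $ i * of_real (partial i \<phi> x))
            + of_real \<omega> * u x * of_real (\<phi> x)
            - of_real (cmod (u x) powr (4 / (dimR n - 2))) * u x * of_real (\<phi> x)
            - g (u x) * of_real (\<phi> x) \<partial>lborel) = 0)"

definition W :: "'n::finite itself \<Rightarrow> real^'n \<Rightarrow> real" where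
  "W n x = (1 + (norm x)\<^sup>2 / (dimR n * (dimR n - 2))) powr (- (dimR n - 2) / 2)"

definition LambdaW :: "'n::finite itself \<Rightarrow> real^'n \<Rightarrow> real" where
  "LambdaW n x = (dimR n - 2) / 2 * W n x + frechet_derivative (W n) (at x) x"

definition Vpot :: "'n::finite itself \<Rightarrow> real^'n \<Rightarrow> real" where
  "Vpot n x = - (dimR n + 2) / (dimR n - 2) * W n x powr (4 / (dimR n - 2))"

definition Tscale :: "'n::finite itself \<Rightarrow> real \<Rightarrow> (real^'n \<Rightarrow> complex) \<Rightarrow> real^'n \<Rightarrow> complex" where
  "Tscale n lam v x = v (lam powr (- 2 / (dimR n - 2)) *\<^sub>R x) / of_real lam"

text \<open>(-\<Delta>+s)^{-1}f: an H^1 weak solution u of -\<Delta>u + s u = f (unique up to null sets).\<close>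
definition resolvent :: "real \<Rightarrow> (real^'n::finite \<Rightarrow> complex) \<Rightarrow> real^'n \<Rightarrow> complex" where
  "resolvent s f = (SOME u. u \<in> H1 \<and>
     (\<forall>\<phi>. test_fun \<phi> \<longrightarrow>
       (\<integral>x. (\<Sum>i\<in>UNIV. grad u x $ i * of_real (partial i \<phi> x)) + of_real s * u x * of_real (\<phi> x) \<partial>lborel)
       = (\<integral>x. f x * of_real (\<phi> x) \<partial>lborel)))"


definition peak :: "(real^'n::finite \<Rightarrow> complex) \<Rightarrow> real" where
  "peak u = Re (u 0)"

definition zeta :: "'n::finite itself \<Rightarrow> (real \<Rightarrow> real^'n \<Rightarrow> complex) \<Rightarrow> (real \<Rightarrow> real) \<Rightarrow> real \<Rightarrow> real^'n \<Rightarrow> complex" where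
  "zeta n \<Phi> \<mu> \<omega> x = Tscale n (\<mu> \<omega>) (Tscale n (peak (\<Phi> \<omega>)) (\<Phi> \<omega>)) x - complex_of_real (W n x)"

definition s_par :: "'n::finite itself \<Rightarrow> (real \<Rightarrow> real^'n \<Rightarrow> complex) \<Rightarrow> (real \<Rightarrow> real) \<Rightarrow> real \<Rightarrow> real" where
  "s_par n \<Phi> \<mu> \<omega> = (\<mu> \<omega> * peak (\<Phi> \<omega>)) powr (- 4 / (dimR n - 2)) * \<omega>"

definition kappa :: "'n::finite itself \<Rightarrow> (complex \<Rightarrow> complex) \<Rightarrow> (real \<Rightarrow> real^'n \<Rightarrow> complex) \<Rightarrow> (real \<Rightarrow> real) \<Rightarrow> real \<Rightarrow> real" where
  "kappa n g \<Phi> \<mu> \<omega> = - rinner (\<lambda>x. g (complex_of_real (\<mu> \<omega> * peak (\<Phi> \<omega>) * W n x)))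
                                (\<lambda>x. complex_of_real (LambdaW n x))"

end

theory Submission
  imports Defs
begin

(* Let lambda = mu(omega) M_omega.  By the homogeneity g(z) = z/|z| g(|z|), kappa(omega) equals
   -<g(lambda W), Lambda W>, so it suffices to show that lambda^(-p2) <g(lambda W), Lambda W> tends
   to (C2/p2) <W^p2, Lambda W> as lambda -> oo, and that lambda(omega) -> oo.

   From (a)-(c): g(t)/t is nondecreasing, g > 0 (otherwise G(t) <= g(t) t / 2 contradicts (c),
   as 2^* > 2), g(t)/t^p2 -> C2/p2 by l'Hopital, and |g(t)| <= C (t^p1 + t^p2).  Since
   |Lambda W| <= (d-2)/2 W and W^(p1+1) is integrable for p1 > 2/(d-2), the first limit follows
   by dominated convergence.

   For lambda(omega) -> oo, test the equation of Phi_omega against a smooth radial bump phi.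
   As 0 < Phi_omega <= M_omega and g(t)/t is nondecreasing,
     (omega - M_omega^(4/(d-2)) - g(M_omega)/M_omega) int Phi_omega phi <= M_omega sum_i int |d_i^2 phi|.
   Rescaling phi to the length scale lambda^(-2/(d-2)) of Phi_omega turns the left integral into
   lambda int (W + Re zeta_omega) psi >= lambda/2 int W psi for large omega, because zeta_omega -> 0
   in L^4.  Hence a bound on lambda would bound omega. *)

section \<open>Real nonlinearities on the half-line\<close>

lemma ratio_mono_if_deriv_mult_ge:
  fixes f :: "real \<Rightarrow> real"
  assumes diff: "\<And>t. t > 0 \<Longrightarrow> f differentiable (at t)"
    and deriv_ge: "\<And>t. t > 0 \<Longrightarrow> deriv f t * t - f t \<ge> 0"
    and "0 < s" "s \<le> t"
  shows "f s / s \<le> f t / t"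
proof (rule DERIV_nonneg_imp_increasing_open[OF \<open>s \<le> t\<close>])
  fix x assume x: "s < x" "x < t"
  then have "x > 0" using \<open>0 < s\<close> by auto
  have "DERIV f x :> deriv f x"
    using diff[OF \<open>x > 0\<close>] by (simp add: DERIV_deriv_iff_real_differentiable)
  then have "DERIV (\<lambda>y. f y / y) x :> (deriv f x * x - f x * 1) / (x * x)"
    by (rule derivative_eq_intros | use \<open>x > 0\<close> in auto)+
  then show "\<exists>y. DERIV (\<lambda>y. f y / y) x :> y \<and> 0 \<le> y"
    using deriv_ge[OF \<open>x > 0\<close>] by auto
next
  have "continuous_on {s..t} f"
    using \<open>0 < s\<close> diff
    by (intro continuous_at_imp_continuous_on) (auto intro: differentiable_imp_continuous_within)
  then show "continuous_on {s..t} (\<lambda>y. f y / y)"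
    using \<open>0 < s\<close> by (intro continuous_intros) auto
qed

lemma deriv_powr_bound_near_0:
  fixes f :: "real \<Rightarrow> real"
  assumes "Limsup (at_right 0) (\<lambda>t. ereal (\<bar>deriv f t\<bar> / t powr (p - 1))) \<le> ereal C"
  obtains \<delta> where "\<delta> > 0" "\<And>s. 0 < s \<Longrightarrow> s < \<delta> \<Longrightarrow> \<bar>deriv f s\<bar> \<le> (C + 1) * s powr (p - 1)"
proof -
  have "Limsup (at_right 0) (\<lambda>t. ereal (\<bar>deriv f t\<bar> / t powr (p - 1))) < ereal (C + 1)"
    using assms by (rule le_less_trans) simp
  then have "\<forall>\<^sub>F t in at_right 0. \<bar>deriv f t\<bar> / t powr (p - 1) < C + 1"
    using Limsup_lessD by fastforce
  then obtain \<delta> where "\<delta> > 0" and \<delta>: "\<And>s. 0 < s \<Longrightarrow> s < \<delta> \<Longrightarrow> \<bar>deriv f s\<bar> / s powr (p - 1) < C + 1"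
    unfolding eventually_at_right_field by auto
  show thesis
  proof (rule that[OF \<open>\<delta> > 0\<close>])
    fix s assume "0 < s" "s < \<delta>"
    then show "\<bar>deriv f s\<bar> \<le> (C + 1) * s powr (p - 1)"
      using \<delta>[of s] by (simp add: divide_less_eq)
  qed
qed

lemma bounded_near_0_if_deriv_powr_bound:
  fixes f :: "real \<Rightarrow> real"
  assumes diff: "\<And>t. t > 0 \<Longrightarrow> f differentiable (at t)"
    and "\<delta> > 0" and deriv_bound: "\<And>s. 0 < s \<Longrightarrow> s < \<delta> \<Longrightarrow> \<bar>deriv f s\<bar> \<le> K * s powr (p - 1)"
    and "p > 1" "t > 0"
  obtains B where "\<And>s. s \<in> {0<..t} \<Longrightarrow> \<bar>f s\<bar> \<le> B"
proof -
  define a where "a = min (\<delta>/2) t"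
  have a: "0 < a" "a < \<delta>" "a \<le> t" using \<open>\<delta> > 0\<close> \<open>t > 0\<close> by (auto simp: a_def)
  have cont: "continuous_on {x..y} f" if "0 < x" for x y
    using that diff
    by (intro continuous_at_imp_continuous_on) (auto intro: differentiable_imp_continuous_within)
  have "compact (f ` {a..t})" using cont[OF \<open>0 < a\<close>] by (intro compact_continuous_image) auto
  then obtain B1 where B1: "\<And>s. s \<in> {a..t} \<Longrightarrow> \<bar>f s\<bar> \<le> B1"
    by (metis compact_imp_bounded bounded_iff image_eqI real_norm_def)
  define B2 where "B2 = \<bar>f a\<bar> + a * (\<bar>K\<bar> * \<delta> powr (p - 1))"
  have B2: "\<bar>f s\<bar> \<le> B2" if s: "0 < s" "s < a" for s
  proof -
    obtain l z where z: "s < z" "z < a" "DERIV f z :> l" "f a - f s = (a - s) * l"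
      using MVT[OF s(2) cont[OF s(1)]] diff s a by force
    have "\<bar>l\<bar> \<le> K * z powr (p - 1)"
      using deriv_bound[of z] z s a by (simp add: DERIV_imp_deriv)
    also have "\<dots> \<le> \<bar>K\<bar> * \<delta> powr (p - 1)"
      using z s a \<open>p > 1\<close> by (intro mult_mono powr_mono2) auto
    finally have "\<bar>(a - s) * l\<bar> \<le> a * (\<bar>K\<bar> * \<delta> powr (p - 1))"
      using s by (simp add: abs_mult) (intro mult_mono, auto)
    then show ?thesis using z(4) by (simp add: B2_def)
  qed
  show thesis
    by (rule that[of "max B1 B2"]) (metis B1 B2 atLeastAtMost_iff greaterThanAtMost_iff le_max_iff_disj not_le)
qed

lemma integrable_on_if_bounded_near_0:
  fixes f :: "real \<Rightarrow> real"
  assumes diff: "\<And>t. t > 0 \<Longrightarrow> f differentiable (at t)"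
    and bound: "\<And>s. s \<in> {0<..t} \<Longrightarrow> \<bar>f s\<bar> \<le> B"
  shows "f integrable_on {0..t}"
proof -
  have Icc: "{0..t} = (if 0 \<le> t then insert 0 {0<..t} else {0<..t})"
    by auto
  have "continuous_on {0<..t} f"
    using diff by (intro continuous_at_imp_continuous_on) (auto intro: differentiable_imp_continuous_within)
  then have "f \<in> borel_measurable (lebesgue_on {0<..t})"
    by (rule continuous_imp_measurable_on_sets_lebesgue) auto
  moreover have "(\<lambda>_. B) integrable_on {0<..t}"
    using integrable_const_ivl[of B 0 t] by (cases "0 \<le> t") (auto simp: Icc integrable_on_insert_iff)
  ultimately have "f integrable_on {0<..t}"
    by (rule measurable_bounded_by_integrable_imp_integrable) (use bound in auto)
  then show ?thesis
    by (cases "0 \<le> t") (auto simp: Icc integrable_on_insert_iff)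
qed

lemma pos_if_integral_dominates:
  fixes f :: "real \<Rightarrow> real"
  assumes diff: "\<And>t. t > 0 \<Longrightarrow> f differentiable (at t)"
    and deriv_ge: "\<And>t. t > 0 \<Longrightarrow> deriv f t * t - f t \<ge> 0"
    and "f 0 = 0" and int: "f integrable_on {0..t}"
    and dominates: "integral {0..t} f > f t * t / q"
    and "q > 2" "t > 0"
  shows "f t > 0"
proof -
  have below_chord: "f s \<le> s * (f t / t)" if "s \<in> {0..t}" for s
  proof (cases "s = 0")
    case False
    then have "f s / s \<le> f t / t"
      using that ratio_mono_if_deriv_mult_ge[OF diff deriv_ge] by auto
    then show ?thesis
      using False that by (simp add: divide_le_eq mult.commute)
  qed (use \<open>f 0 = 0\<close> in simp)
  have "((\<lambda>s. s * (f t / t)) has_integral (t\<^sup>2 / 2) * (f t / t)) {0..t}"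
    using ident_has_integral[of 0 t] \<open>t > 0\<close> by (intro has_integral_mult_left) simp
  then have "integral {0..t} f \<le> (t\<^sup>2 / 2) * (f t / t)"
    using integral_le[OF int _ below_chord] by (metis has_integral_integrable integral_unique)
  also have "\<dots> = f t * t / 2"
    using \<open>t > 0\<close> by (simp add: power2_eq_square)
  finally have "f t * t / 2 - f t * t / q > 0"
    using dominates by linarith
  then have "(f t * t) * (1 / 2 - 1 / q) > 0"
    by (simp add: algebra_simps)
  moreover have "1 / 2 - 1 / q > 0"
    using \<open>q > 2\<close> by (simp add: field_simps)
  ultimately show ?thesis
    using \<open>t > 0\<close> by (simp add: zero_less_mult_iff)
qed

lemma tendsto_div_powr_at_top_if_deriv:
  fixes f :: "real \<Rightarrow> real"
  assumes diff: "\<And>t. t > 0 \<Longrightarrow> f differentiable (at t)"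
    and lim: "((\<lambda>t. deriv f t / t powr (p - 1)) \<longlongrightarrow> L) at_top"
    and "p > 0"
  shows "((\<lambda>t. f t / t powr p) \<longlongrightarrow> L / p) at_top"
proof (rule lhospital_at_top_at_top[where f' = "deriv f" and g' = "\<lambda>t. p * t powr (p - 1)"])
  show "LIM x at_top. x powr p :> at_top"
    unfolding filterlim_at_top
  proof
    fix Z :: real
    show "\<forall>\<^sub>F x in at_top. Z \<le> x powr p"
      using eventually_ge_at_top[of "(\<bar>Z\<bar> + 1) powr (1 / p)"]
    proof eventually_elim
      case (elim x)
      have "Z \<le> ((\<bar>Z\<bar> + 1) powr (1 / p)) powr p"
        using \<open>p > 0\<close> by (simp add: powr_powr)
      also have "\<dots> \<le> x powr p"
        using elim \<open>p > 0\<close> by (intro powr_mono2) auto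
      finally show ?case .
    qed
  qed
  show "\<forall>\<^sub>F x in at_top. p * x powr (p - 1) \<noteq> 0"
    using eventually_gt_at_top[of 0] by eventually_elim (use \<open>p > 0\<close> in auto)
  show "\<forall>\<^sub>F x in at_top. DERIV f x :> deriv f x"
    using eventually_gt_at_top[of 0]
    by eventually_elim (use diff in \<open>auto simp: DERIV_deriv_iff_real_differentiable\<close>)
  show "\<forall>\<^sub>F x in at_top. ((\<lambda>x. x powr p) has_real_derivative p * x powr (p - 1)) (at x)"
    using eventually_gt_at_top[of 0] by eventually_elim (auto intro!: derivative_eq_intros)
  have "((\<lambda>t. (deriv f t / t powr (p - 1)) / p) \<longlongrightarrow> L / p) at_top"
    by (intro tendsto_intros lim) (use \<open>p > 0\<close> in auto)
  then show "((\<lambda>t. deriv f t / (p * t powr (p - 1))) \<longlongrightarrow> L / p) at_top"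
    by (simp add: field_simps)
qed

lemma le_powr_if_deriv_powr_bound:
  fixes f :: "real \<Rightarrow> real"
  assumes "deriv f t * t - f t \<ge> 0" "\<bar>deriv f t\<bar> \<le> K * t powr (p - 1)" "t > 0"
  shows "f t \<le> K * t powr p"
proof -
  have "f t \<le> \<bar>deriv f t\<bar> * t"
    using assms(1,3) by (smt (verit) mult_right_mono abs_ge_self)
  also have "\<dots> \<le> K * t powr (p - 1) * t"
    using assms(2,3) by (intro mult_right_mono) auto
  also have "\<dots> = K * t powr p"
    using \<open>t > 0\<close> by (simp add: powr_diff field_simps)
  finally show ?thesis .
qed

lemma powr_growth_bound:
  fixes f :: "real \<Rightarrow> real"
  assumes diff: "\<And>t. t > 0 \<Longrightarrow> f differentiable (at t)"
    and deriv_ge: "\<And>t. t > 0 \<Longrightarrow> deriv f t * t - f t \<ge> 0"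
    and pos: "\<And>t. t > 0 \<Longrightarrow> f t > 0"
    and "\<delta> > 0" and deriv_bound: "\<And>s. 0 < s \<Longrightarrow> s < \<delta> \<Longrightarrow> \<bar>deriv f s\<bar> \<le> K * s powr (p - 1)"
    and asymp: "((\<lambda>t. f t / t powr q) \<longlongrightarrow> L) at_top"
    and "p > 0"
  obtains C where "C > 0" "\<And>t. t > 0 \<Longrightarrow> f t \<le> C * (t powr p + t powr q)"
proof -
  obtain T0 where T0: "\<And>t. t \<ge> T0 \<Longrightarrow> f t / t powr q < \<bar>L\<bar> + 1"
    using order_tendstoD(2)[OF asymp, of "\<bar>L\<bar> + 1"] by (force simp: eventually_at_top_linorder)
  define T where "T = max T0 \<delta>"
  have "T > 0" using \<open>\<delta> > 0\<close> by (auto simp: T_def)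
  define C where "C = max (max (\<bar>K\<bar> + 1) (\<bar>L\<bar> + 1)) (f T / \<delta> powr p)"
  have C: "C \<ge> \<bar>K\<bar> + 1" "C \<ge> \<bar>L\<bar> + 1" "C \<ge> f T / \<delta> powr p"
    unfolding C_def by auto
  have either: "f t \<le> C * t powr p \<or> f t \<le> C * t powr q" if "t > 0" for t
  proof -
    consider "t < \<delta>" | "t \<ge> T0" | "\<delta> \<le> t" "t \<le> T"
      by (fastforce simp: T_def)
    then show ?thesis
    proof cases
      case 1
      have "f t \<le> K * t powr p"
        using le_powr_if_deriv_powr_bound[OF deriv_ge deriv_bound] \<open>t > 0\<close> 1 by blast
      also have "\<dots> \<le> C * t powr p"
        using C(1) by (intro mult_right_mono) auto
      finally show ?thesis ..
    next
      case 2
      then have "f t \<le> (\<bar>L\<bar> + 1) * t powr q"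
        using T0[of t] \<open>t > 0\<close> by (simp add: divide_less_eq less_imp_le)
      also have "\<dots> \<le> C * t powr q"
        using C(2) by (intro mult_right_mono) auto
      finally show ?thesis ..
    next
      case 3
      have "f t \<le> t * (f T / T)"
        using ratio_mono_if_deriv_mult_ge[OF diff deriv_ge \<open>t > 0\<close> \<open>t \<le> T\<close>] \<open>t > 0\<close>
        by (simp add: divide_le_eq mult.commute)
      also have "\<dots> \<le> f T"
        using \<open>t \<le> T\<close> pos[OF \<open>T > 0\<close>] \<open>T > 0\<close> by (simp add: mult_imp_div_pos_le)
      also have "\<dots> = (f T / \<delta> powr p) * \<delta> powr p"
        using \<open>\<delta> > 0\<close> by simp
      also have "\<dots> \<le> C * t powr p"
        using C(1,3) 3 \<open>\<delta> > 0\<close> pos[OF \<open>T > 0\<close>] \<open>p > 0\<close> by (intro mult_mono powr_mono2) auto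
      finally show ?thesis ..
    qed
  qed
  have "C > 0"
    using C(1) by linarith
  show thesis
  proof (rule that[OF \<open>C > 0\<close>])
    fix t :: real assume "t > 0"
    have "0 \<le> C * t powr p" "0 \<le> C * t powr q"
      using \<open>C > 0\<close> by auto
    then show "f t \<le> C * (t powr p + t powr q)"
      using either[OF \<open>t > 0\<close>] by (simp add: distrib_left) linarith
  qed
qed

lemma assumptions_g_exponents:
  assumes "assumptions_g n g p1 p2 C1 C2 C3" "dimR n > 2"
  shows "1 < p1" "p1 < p2" "dimR n < (dimR n - 2) * (p1 + 1)"
proof -
  have "2 / (dimR n - 2) < p1" "1 < p1" "p1 < p2"
    using assms(1) unfolding assumptions_g_def Let_def by auto
  then show "1 < p1" "p1 < p2" "dimR n < (dimR n - 2) * (p1 + 1)"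
    using assms(2) by (auto simp: field_simps)
qed

lemma assumptions_g_of_real:
  assumes "assumptions_g n g p1 p2 C1 C2 C3" "t > 0"
  shows "g (complex_of_real t) = complex_of_real (g_real g t)"
proof -
  have "g (complex_of_real t) \<in> \<real>"
    using assms unfolding assumptions_g_def Let_def by blast
  then show ?thesis
    by (simp add: g_real_def complex_is_Real_iff complex_eq_iff)
qed

lemma assumptions_g_differentiable:
  assumes "assumptions_g n g p1 p2 C1 C2 C3" "t > 0"
  shows "g_real g differentiable (at t)"
  using assms unfolding assumptions_g_def Let_def by blast

lemma assumptions_g_continuous:
  assumes "assumptions_g n g p1 p2 C1 C2 C3"
  shows "continuous_on {0<..} (g_real g)"
  using assumptions_g_differentiable[OF assms]
  by (intro continuous_at_imp_continuous_on) (auto intro: differentiable_imp_continuous_within)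

lemma assumptions_g_ratio_mono:
  assumes "assumptions_g n g p1 p2 C1 C2 C3" "0 < s" "s \<le> t"
  shows "g_real g s / s \<le> g_real g t / t"
  using assms(1) assumptions_g_differentiable[OF assms(1)] assms(2,3)
  unfolding assumptions_g_def Let_def by (intro ratio_mono_if_deriv_mult_ge) auto

lemma assumptions_g_tendsto:
  assumes "assumptions_g n g p1 p2 C1 C2 C3" "dimR n > 2"
  shows "((\<lambda>t. g_real g t / t powr p2) \<longlongrightarrow> C2 / p2) at_top"
proof (rule tendsto_div_powr_at_top_if_deriv)
  show "((\<lambda>t. deriv (g_real g) t / t powr (p2 - 1)) \<longlongrightarrow> C2) at_top"
    using assms(1) unfolding assumptions_g_def Let_def by blast
  show "p2 > 0"
    using assumptions_g_exponents[OF assms] by linarith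
qed (rule assumptions_g_differentiable[OF assms(1)])

lemma assumptions_g_near_0:
  assumes "assumptions_g n g p1 p2 C1 C2 C3"
  obtains \<delta> where "\<delta> > 0" "\<And>s. 0 < s \<Longrightarrow> s < \<delta> \<Longrightarrow> \<bar>deriv (g_real g) s\<bar> \<le> (C1 + 1) * s powr (p1 - 1)"
proof -
  have "Limsup (at_right 0) (\<lambda>t. ereal (\<bar>deriv (g_real g) t\<bar> / t powr (p1 - 1))) \<le> ereal C1"
    using assms unfolding assumptions_g_def Let_def by blast
  from deriv_powr_bound_near_0[OF this] show thesis
    using that by blast
qed

lemma assumptions_g_deriv_mult_ge:
  assumes "assumptions_g n g p1 p2 C1 C2 C3" "t > 0"
  shows "deriv (g_real g) t * t - g_real g t \<ge> 0"
  using assms unfolding assumptions_g_def Let_def by blast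

lemma assumptions_g_pos:
  assumes g: "assumptions_g n g p1 p2 C1 C2 C3" and "dimR n > 2" "t > 0"
  shows "g_real g t > 0"
proof -
  note diff = assumptions_g_differentiable[OF g]
  obtain \<delta> where "\<delta> > 0" "\<And>s. 0 < s \<Longrightarrow> s < \<delta> \<Longrightarrow> \<bar>deriv (g_real g) s\<bar> \<le> (C1 + 1) * s powr (p1 - 1)"
    using assumptions_g_near_0[OF g] by blast
  moreover have "p1 > 1"
    using assumptions_g_exponents[OF assms(1,2)] by blast
  ultimately obtain B where "\<And>s. s \<in> {0<..t} \<Longrightarrow> \<bar>g_real g s\<bar> \<le> B"
    using bounded_near_0_if_deriv_powr_bound[OF diff] \<open>t > 0\<close> by blast
  then have int: "g_real g integrable_on {0..t}"
    using integrable_on_if_bounded_near_0[OF diff] by blast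
  have "C3 > 0" "C3 * t powr (p2 + 1) \<le> integral {0..t} (g_real g) - g_real g t * t / crit_exp n"
    using g \<open>t > 0\<close> unfolding assumptions_g_def Let_def G_prim_def by auto
  moreover have "C3 * t powr (p2 + 1) > 0"
    using \<open>C3 > 0\<close> \<open>t > 0\<close> by simp
  ultimately have dominates: "integral {0..t} (g_real g) > g_real g t * t / crit_exp n"
    by linarith
  have "g_real g 0 = 0"
    using g unfolding assumptions_g_def Let_def by (simp add: g_real_def)
  moreover have "crit_exp n > 2"
    using \<open>dimR n > 2\<close> by (simp add: crit_exp_def field_simps)
  ultimately show ?thesis
    using pos_if_integral_dominates[OF diff assumptions_g_deriv_mult_ge[OF g] _ int dominates] \<open>t > 0\<close>
    by blast
qed

lemma assumptions_g_growth:
  assumes g: "assumptions_g n g p1 p2 C1 C2 C3" and "dimR n > 2"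
  obtains C where "C > 0" "\<And>t. t > 0 \<Longrightarrow> \<bar>g_real g t\<bar> \<le> C * (t powr p1 + t powr p2)"
proof -
  obtain \<delta> where "\<delta> > 0" "\<And>s. 0 < s \<Longrightarrow> s < \<delta> \<Longrightarrow> \<bar>deriv (g_real g) s\<bar> \<le> (C1 + 1) * s powr (p1 - 1)"
    using assumptions_g_near_0[OF g] by blast
  moreover have "p1 > 0"
    using assumptions_g_exponents[OF assms] by linarith
  ultimately obtain C where "C > 0" "\<And>t. t > 0 \<Longrightarrow> g_real g t \<le> C * (t powr p1 + t powr p2)"
    using powr_growth_bound[OF assumptions_g_differentiable[OF g] assumptions_g_deriv_mult_ge[OF g]
        assumptions_g_pos[OF assms] _ _ assumptions_g_tendsto[OF assms]] by blast
  then show thesis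
    using that assumptions_g_pos[OF assms] by (metis abs_of_pos)
qed

section \<open>The Aubin--Talenti bubble\<close>

lemma integrable_indicator_atLeast_1_powr:
  assumes "e < -1"
  shows "integrable lborel (\<lambda>t::real. indicator {1..} t * t powr e)"
proof -
  have "(\<lambda>t::real. t powr e) integrable_on {1..}"
    using has_integral_powr_to_inf[OF assms zero_less_one] by (auto simp: integrable_on_def)
  then have "(\<lambda>t::real. t powr e) absolutely_integrable_on {1..}"
    by (subst absolutely_integrable_on_iff_nonneg) auto
  then have "integrable lebesgue (\<lambda>t::real. indicator {1..} t *\<^sub>R t powr e)"
    by (simp add: set_integrable_def)
  then show ?thesis
    by (subst (asm) integrable_completion) auto
qed

lemma one_plus_square_powr_le:
  fixes t :: real
  assumes "a > 0" "c > 0" "\<bar>t\<bar> \<ge> 1"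
  shows "(1 + t\<^sup>2 / c) powr (-a) \<le> c powr a * \<bar>t\<bar> powr (-2 * a)"
proof -
  have sq: "t\<^sup>2 = \<bar>t\<bar> powr 2"
    using assms(3) by (simp add: powr_realpow)
  have "(1 + t\<^sup>2 / c) powr (-a) \<le> (t\<^sup>2 / c) powr (-a)"
    using assms by (intro powr_mono2') auto
  also have "\<dots> = (\<bar>t\<bar> powr 2) powr (-a) / c powr (-a)"
    unfolding sq by (rule powr_divide)
  also have "\<dots> = c powr a * \<bar>t\<bar> powr (-2 * a)"
    unfolding powr_powr by (simp add: powr_minus divide_inverse)
  finally show ?thesis .
qed

lemma integrable_one_plus_square_powr:
  assumes "a > 1/2" "c > 0"
  shows "integrable lborel (\<lambda>t::real. (1 + t\<^sup>2 / c) powr (-a))"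
proof -
  define tail where "tail t = indicator {1..} t * t powr (-2 * a)" for t :: real
  define m where "m t = indicator {-1..1} t + c powr a * (tail t + tail (-t))" for t :: real
  have "integrable lborel tail"
    unfolding tail_def by (rule integrable_indicator_atLeast_1_powr) (use assms in auto)
  moreover from this have "integrable lborel (\<lambda>t. tail (-t))"
    using lborel_integrable_real_affine[of tail "-1" 0] by simp
  moreover have "integrable lborel (\<lambda>t::real. indicator {-1..1} t :: real)"
    by (rule integrable_real_indicator) auto
  ultimately have "integrable lborel m"
    unfolding m_def by (intro Bochner_Integration.integrable_add integrable_mult_right)
  then show ?thesis
  proof (rule Bochner_Integration.integrable_bound)
    show "AE t in lborel. norm ((1 + t\<^sup>2 / c) powr (-a)) \<le> norm (m t)"
    proof (rule AE_I2)
      fix t :: real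
      have tail_nonneg: "tail s \<ge> 0" for s
        by (simp add: tail_def)
      have "(1 + t\<^sup>2 / c) powr (-a) \<le> m t"
      proof (cases "\<bar>t\<bar> \<le> 1")
        case True
        have "(1 + t\<^sup>2 / c) powr (-a) \<le> 1"
          using assms by (simp add: powr_minus inverse_le_1_iff ge_one_powr_ge_zero)
        moreover have "c powr a * (tail t + tail (-t)) \<ge> 0"
          using tail_nonneg[of t] tail_nonneg[of "-t"] by simp
        ultimately show ?thesis
          using True by (simp add: m_def indicator_def abs_le_iff)
      next
        case False
        then have "tail t + tail (-t) = \<bar>t\<bar> powr (-2 * a)"
          by (auto simp: tail_def indicator_def)
        then show ?thesis
          using one_plus_square_powr_le[of a c t] False assms
          by (simp add: m_def indicator_def)
      qed
      moreover have "m t \<ge> 0"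
        using tail_nonneg[of t] tail_nonneg[of "-t"] by (simp add: m_def)
      ultimately show "norm ((1 + t\<^sup>2 / c) powr (-a)) \<le> norm (m t)"
        by simp
    qed
  qed measurable
qed

lemma integrable_prod_Basis_inner:
  fixes h :: "real \<Rightarrow> real"
  assumes "integrable lborel h" "\<And>t. h t \<ge> 0"
  shows "integrable lborel (\<lambda>x::'a::euclidean_space. \<Prod>b\<in>Basis. h (x \<bullet> b))"
proof (rule integrableI_nonneg)
  have [measurable]: "h \<in> borel_measurable borel"
    using borel_measurable_integrable[OF assms(1)] by simp
  show "(\<lambda>x::'a. \<Prod>b\<in>Basis. h (x \<bullet> b)) \<in> borel_measurable lborel"
    by measurable
  show "AE x in lborel. 0 \<le> (\<Prod>b\<in>Basis. h (x \<bullet> b))"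
    using assms(2) by (auto intro: prod_nonneg)
  have "(\<integral>\<^sup>+x. ennreal (\<Prod>b\<in>Basis. h ((x::'a) \<bullet> b)) \<partial>lborel) = (\<integral>\<^sup>+x. (\<Prod>b\<in>Basis. ennreal (h ((x::'a) \<bullet> b))) \<partial>lborel)"
    using assms(2) by (simp add: prod_ennreal)
  also have "\<dots> = (\<Prod>b\<in>(Basis::'a set). (\<integral>\<^sup>+t. ennreal (h t) \<partial>lborel))"
    by (rule nn_integral_lborel_prod) auto
  also have "\<dots> < \<infinity>"
  proof -
    have "(\<integral>\<^sup>+t. ennreal (h t) \<partial>lborel) < \<infinity>"
      using assms by (simp add: integrable_iff_bounded)
    then show ?thesis
      by (simp add: power_less_top_ennreal)
  qed
  finally show "(\<integral>\<^sup>+x. ennreal (\<Prod>b\<in>Basis. h ((x::'a) \<bullet> b)) \<partial>lborel) < \<infinity>" .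
qed

text \<open>The radial weight is dominated by a product of one-dimensional weights, one per coordinate.\<close>

lemma integrable_one_plus_norm_square_powr:
  fixes c s :: real
  assumes "c > 0" and "2 * s > real DIM('a::euclidean_space)"
  shows "integrable lborel (\<lambda>x::'a. (1 + (norm x)\<^sup>2 / c) powr (-s))"
proof -
  define a where "a = s / DIM('a)"
  have "a > 1/2"
    using assms(2) by (simp add: a_def field_simps)
  define h where "h t = (1 + t\<^sup>2 / c) powr (-a)" for t :: real
  have "integrable lborel (\<lambda>x::'a. \<Prod>b\<in>Basis. h (x \<bullet> b))"
    unfolding h_def
    by (intro integrable_prod_Basis_inner integrable_one_plus_square_powr \<open>a > 1/2\<close> \<open>c > 0\<close>) simp
  then show ?thesis
  proof (rule Bochner_Integration.integrable_bound)
    show "AE x in lborel. norm ((1 + (norm x)\<^sup>2 / c) powr (-s)) \<le> norm (\<Prod>b\<in>Basis. h ((x::'a) \<bullet> b))"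
    proof (rule AE_I2)
      fix x :: 'a
      define u where "u = 1 + (norm x)\<^sup>2 / c"
      have "u \<ge> 1"
        using \<open>c > 0\<close> by (simp add: u_def)
      have "u powr (-s) = (u powr (-a)) ^ DIM('a)"
        using \<open>u \<ge> 1\<close> by (simp add: a_def powr_realpow[symmetric] powr_powr)
      also have "\<dots> = (\<Prod>b\<in>(Basis::'a set). u powr (-a))"
        by simp
      also have "\<dots> \<le> (\<Prod>b\<in>Basis. h (x \<bullet> b))"
      proof (rule prod_mono)
        fix b :: 'a assume "b \<in> Basis"
        then have "(x \<bullet> b)\<^sup>2 \<le> (norm x)\<^sup>2"
          using Basis_le_norm by (metis abs_le_square_iff abs_norm_cancel)
        then have "1 + (x \<bullet> b)\<^sup>2 / c \<le> u"
          unfolding u_def using \<open>c > 0\<close> by (simp add: divide_right_mono)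
        then show "0 \<le> u powr (-a) \<and> u powr (-a) \<le> h (x \<bullet> b)"
          unfolding h_def using \<open>a > 1/2\<close> \<open>c > 0\<close> by (auto intro!: powr_mono2' add_pos_nonneg)
      qed
      finally show "norm ((1 + (norm x)\<^sup>2 / c) powr (-s)) \<le> norm (\<Prod>b\<in>Basis. h (x \<bullet> b))"
        by (simp add: u_def)
    qed
  qed measurable
qed

definition bubble_base :: "'n::finite itself \<Rightarrow> real^'n \<Rightarrow> real" where
  "bubble_base n x = 1 + (norm x)\<^sup>2 / (dimR n * (dimR n - 2))"

lemma bubble_base_ge_1:
  assumes "dimR n > 2"
  shows "bubble_base n x \<ge> 1"
proof -
  have "(norm x)\<^sup>2 / (dimR n * (dimR n - 2)) \<ge> 0"
    using assms by (intro divide_nonneg_pos) auto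
  then show ?thesis
    unfolding bubble_base_def by linarith
qed

lemma continuous_on_bubble_base: "continuous_on UNIV (bubble_base n)"
  unfolding bubble_base_def[abs_def] divide_inverse by (intro continuous_intros)

lemma W_eq_bubble_base_powr: "W n x = bubble_base n x powr (- (dimR n - 2) / 2)"
  unfolding W_def bubble_base_def by simp

lemma W_eq_bubble_base_powr_mult:
  assumes "dimR n > 2"
  shows "W n x = bubble_base n x powr (- dimR n / 2) * bubble_base n x"
proof -
  have "W n x = bubble_base n x powr (- dimR n / 2 + 1)"
    unfolding W_eq_bubble_base_powr by (simp add: field_simps)
  also have "\<dots> = bubble_base n x powr (- dimR n / 2) * bubble_base n x powr 1"
    by (rule powr_add)
  finally show ?thesis
    using bubble_base_ge_1[OF assms, of x] by simp
qed

lemma has_derivative_W: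
  assumes "dimR n > 2"
  shows "(W n has_derivative (\<lambda>h. - (x \<bullet> h) / dimR n * bubble_base n x powr (- dimR n / 2))) (at x)"
proof -
  define d where "d = dimR n"
  have "d > 2" using assms by (simp add: d_def)
  have "((\<lambda>y. 1 + inverse (d * (d - 2)) * (y \<bullet> y)) has_derivative
      (\<lambda>h. inverse (d * (d - 2)) * (h \<bullet> x + x \<bullet> h))) (at x)"
    by (auto intro!: derivative_eq_intros)
  then have base: "(bubble_base n has_derivative (\<lambda>h. 2 * (x \<bullet> h) / (d * (d - 2)))) (at x)"
    by (simp add: bubble_base_def[abs_def] power2_norm_eq_inner d_def inner_commute divide_inverse
        mult.commute)
  have "bubble_base n x > 0"
    using bubble_base_ge_1[OF assms, of x] by simp
  from DERIV_compose_FDERIV[OF has_real_derivative_powr[OF this, of "- (d - 2) / 2"] base]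
  have "((\<lambda>y. bubble_base n y powr (- (d - 2) / 2)) has_derivative
      (\<lambda>h. 2 * (x \<bullet> h) / (d * (d - 2)) * (- (d - 2) / 2 * bubble_base n x powr (- (d - 2) / 2 - 1)))) (at x)" .
  moreover have "- (d - 2) / 2 - 1 = - d / 2" "2 * y / (d * (d - 2)) * (- (d - 2) / 2 * z) = - y / d * z"
    for y z :: real
    using \<open>d > 2\<close> by (auto simp: field_simps)
  ultimately show ?thesis
    unfolding W_eq_bubble_base_powr[abs_def] d_def by simp
qed

lemma LambdaW_eq:
  assumes "dimR n > 2"
  shows "LambdaW n x = (dimR n - 2) / 2 * bubble_base n x powr (- dimR n / 2) * (2 - bubble_base n x)"
proof -
  define d where "d = dimR n"
  define u where "u = bubble_base n x"
  have "d > 2"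
    using assms by (simp add: d_def)
  have sq: "x \<bullet> x = d * (d - 2) * (u - 1)"
    using \<open>d > 2\<close> by (simp add: u_def d_def bubble_base_def power2_norm_eq_inner)
  have "LambdaW n x = (d - 2) / 2 * (u powr (- d / 2) * u) - (x \<bullet> x) / d * u powr (- d / 2)"
    unfolding LambdaW_def frechet_derivative_at[OF has_derivative_W[OF assms, of x], symmetric]
    by (simp add: W_eq_bubble_base_powr_mult[OF assms] d_def u_def)
  also have "\<dots> = (d - 2) / 2 * u powr (- d / 2) * (2 - u)"
    unfolding sq using \<open>d > 2\<close> by (simp add: field_simps)
  finally show ?thesis
    by (simp add: d_def u_def)
qed

lemma abs_LambdaW_le:
  assumes "dimR n > 2"
  shows "\<bar>LambdaW n x\<bar> \<le> (dimR n - 2) / 2 * W n x"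
proof -
  define u where "u = bubble_base n x"
  have "u \<ge> 1"
    using bubble_base_ge_1[OF assms] by (simp add: u_def)
  then have "\<bar>LambdaW n x\<bar> \<le> (dimR n - 2) / 2 * u powr (- dimR n / 2) * u"
    unfolding LambdaW_eq[OF assms] u_def[symmetric] using assms
    by (simp add: abs_mult mult_left_mono)
  then show ?thesis
    by (simp add: W_eq_bubble_base_powr_mult[OF assms] u_def mult.assoc)
qed

lemma W_pos: "dimR n > 2 \<Longrightarrow> W n x > 0"
  using bubble_base_ge_1[of n x] by (simp add: W_eq_bubble_base_powr)

lemma W_le_1:
  assumes "dimR n > 2"
  shows "W n x \<le> 1"
proof -
  have "bubble_base n x powr (- (dimR n - 2) / 2) \<le> bubble_base n x powr 0"
    using assms bubble_base_ge_1[OF assms, of x] by (intro powr_mono) auto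
  then show ?thesis
    using bubble_base_ge_1[OF assms, of x] by (simp add: W_eq_bubble_base_powr)
qed

lemma continuous_on_W: "dimR n > 2 \<Longrightarrow> continuous_on UNIV (W n)"
  unfolding W_eq_bubble_base_powr[abs_def]
  by (intro continuous_intros continuous_on_bubble_base) (smt (verit) bubble_base_ge_1)

lemma continuous_on_LambdaW:
  assumes "dimR n > 2"
  shows "continuous_on UNIV (LambdaW n)"
proof -
  have "LambdaW n = (\<lambda>x. (dimR n - 2) / 2 * bubble_base n x powr (- dimR n / 2) * (2 - bubble_base n x))"
    using LambdaW_eq[OF assms] by auto
  then show ?thesis
    by (simp only:) (intro continuous_intros continuous_on_bubble_base, smt (verit) bubble_base_ge_1 assms)
qed

lemma integrable_W_powr:
  assumes "dimR n > 2" "(dimR n - 2) * q > dimR n"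
  shows "integrable lborel (\<lambda>x::real^'n::finite. W n x powr q)"
proof -
  have "integrable lborel (\<lambda>x::real^'n. (1 + (norm x)\<^sup>2 / (dimR n * (dimR n - 2))) powr (- ((dimR n - 2) * q / 2)))"
    using assms by (intro integrable_one_plus_norm_square_powr) (auto simp: dimR_def)
  moreover have "W n x powr q = (1 + (norm x)\<^sup>2 / (dimR n * (dimR n - 2))) powr (- ((dimR n - 2) * q / 2))"
    for x :: "real^'n"
    unfolding W_def powr_powr by (rule arg_cong2[where f = "(powr)"]) (simp_all add: field_simps)
  ultimately show ?thesis
    by simp
qed

section \<open>Dominated convergence for the rescaled nonlinearity\<close>

lemma abs_div_powr_le_if_growth_bound:
  fixes f :: "real \<Rightarrow> real"
  assumes bound: "\<And>t. t > 0 \<Longrightarrow> \<bar>f t\<bar> \<le> C * (t powr p + t powr q)"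
    and "l \<ge> 1" "0 < v" "v \<le> 1" "0 < p" "p \<le> q"
  shows "\<bar>f (l * v)\<bar> / l powr q \<le> 2 * \<bar>C\<bar> * v powr p"
proof -
  have "(l * v) powr p + (l * v) powr q = l powr p * v powr p + l powr q * v powr q"
    using assms by (simp add: powr_mult)
  also have "\<dots> \<le> l powr q * v powr p + l powr q * v powr p"
    using assms by (intro add_mono mult_mono powr_mono powr_mono') auto
  finally have sum_le: "(l * v) powr p + (l * v) powr q \<le> 2 * (l powr q * v powr p)"
    by simp
  have "\<bar>f (l * v)\<bar> \<le> C * ((l * v) powr p + (l * v) powr q)"
    using bound[of "l * v"] assms by simp
  also have "\<dots> \<le> \<bar>C\<bar> * ((l * v) powr p + (l * v) powr q)"
    by (intro mult_right_mono) auto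
  also have "\<dots> \<le> \<bar>C\<bar> * (2 * (l powr q * v powr p))"
    using sum_le by (intro mult_left_mono) auto
  finally show ?thesis
    using \<open>l \<ge> 1\<close> by (simp add: divide_le_eq mult_ac)
qed

lemma abs_rescaled_integrand_le:
  fixes f :: "real \<Rightarrow> real"
  assumes "dimR n > 2" and bound: "\<And>t. t > 0 \<Longrightarrow> \<bar>f t\<bar> \<le> C * (t powr p + t powr q)"
    and "l \<ge> 1" "0 < p" "p \<le> q"
  shows "\<bar>f (l * W n x) / l powr q * LambdaW n x\<bar> \<le> \<bar>C\<bar> * (dimR n - 2) * W n x powr (p + 1)"
proof -
  note W_pos = W_pos[OF \<open>dimR n > 2\<close>, of x]
  have "\<bar>f (l * W n x)\<bar> / l powr q * \<bar>LambdaW n x\<bar> \<le> (2 * \<bar>C\<bar> * W n x powr p) * ((dimR n - 2) / 2 * W n x)"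
    using abs_div_powr_le_if_growth_bound[OF bound \<open>l \<ge> 1\<close> W_pos W_le_1[OF \<open>dimR n > 2\<close>] \<open>0 < p\<close> \<open>p \<le> q\<close>]
      abs_LambdaW_le[OF \<open>dimR n > 2\<close>]
    by (intro mult_mono) auto
  also have "\<dots> = \<bar>C\<bar> * (dimR n - 2) * W n x powr (p + 1)"
    using W_pos by (simp add: powr_add field_simps)
  finally show ?thesis
    using \<open>l \<ge> 1\<close> by (simp add: abs_mult)
qed

lemma tendsto_rescaled_integrand:
  fixes f :: "real \<Rightarrow> real"
  assumes "dimR n > 2" and asymp: "((\<lambda>t. f t / t powr q) \<longlongrightarrow> L) at_top"
  shows "((\<lambda>l. f (l * W n x) / l powr q * LambdaW n x) \<longlongrightarrow> L * (W n x powr q * LambdaW n x)) at_top"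
proof -
  note W_pos = W_pos[OF \<open>dimR n > 2\<close>, of x]
  have "LIM l at_top. l * W n x :> at_top"
    by (rule filterlim_at_top_mult_tendsto_pos[OF tendsto_const W_pos filterlim_ident])
  from filterlim_compose[OF asymp this]
  have "((\<lambda>l. f (l * W n x) / (l * W n x) powr q * W n x powr q * LambdaW n x) \<longlongrightarrow>
      L * W n x powr q * LambdaW n x) at_top"
    by (intro tendsto_intros)
  moreover have "\<forall>\<^sub>F l in at_top.
      f (l * W n x) / (l * W n x) powr q * W n x powr q * LambdaW n x = f (l * W n x) / l powr q * LambdaW n x"
    using eventually_gt_at_top[of 0] by eventually_elim (use W_pos in \<open>simp add: powr_mult\<close>)
  ultimately show ?thesis
    by (simp add: tendsto_cong mult.assoc)
qed

lemma continuous_on_rescaled_integrand: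
  fixes f :: "real \<Rightarrow> real"
  assumes "dimR n > 2" "continuous_on {0<..} f" "l > 0"
  shows "continuous_on UNIV (\<lambda>x. f (l * W n x) / l powr q * LambdaW n x)"
proof -
  have "continuous_on UNIV (\<lambda>x. f (l * W n x))"
    by (rule continuous_on_compose2[OF assms(2)])
      (use assms W_pos[OF assms(1)] continuous_on_W[OF assms(1)] in \<open>auto intro!: continuous_intros\<close>)
  then show ?thesis
    using assms(3) continuous_on_LambdaW[OF assms(1)] by (auto intro!: continuous_intros)
qed

lemma tendsto_integral_rescaled_nonlinearity:
  fixes f :: "real \<Rightarrow> real"
  assumes "dimR n > 2" and cont: "continuous_on {0<..} f"
    and bound: "\<And>t. t > 0 \<Longrightarrow> \<bar>f t\<bar> \<le> C * (t powr p + t powr q)"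
    and asymp: "((\<lambda>t. f t / t powr q) \<longlongrightarrow> L) at_top"
    and "0 < p" "p \<le> q" "dimR n < (dimR n - 2) * (p + 1)"
  shows "((\<lambda>l. (\<integral>x. f (l * W n x) * LambdaW n x \<partial>lborel) / l powr q) \<longlongrightarrow>
           L * (\<integral>x. W n x powr q * LambdaW n x \<partial>lborel)) at_top"
proof -
  define s where "s l x = (if l > 0 then f (l * W n x) / l powr q * LambdaW n x else 0)" for l x
    \<comment> \<open>the guard only makes every \<open>s l\<close> measurable\<close>
  have "(\<lambda>x. L * (W n x powr q * LambdaW n x)) \<in> borel_measurable lborel"
    unfolding measurable_lborel2
    by (intro borel_measurable_continuous_onI continuous_intros continuous_on_W continuous_on_LambdaW
        \<open>dimR n > 2\<close>) (metis W_pos[OF \<open>dimR n > 2\<close>] less_irrefl)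
  moreover have "s l \<in> borel_measurable lborel" for l
  proof (cases "l > 0")
    case True
    then have "s l = (\<lambda>x. f (l * W n x) / l powr q * LambdaW n x)"
      by (simp add: s_def fun_eq_iff)
    then show ?thesis
      using continuous_on_rescaled_integrand[OF \<open>dimR n > 2\<close> cont True, of q]
      unfolding measurable_lborel2 by (simp add: borel_measurable_continuous_onI)
  next
    case False
    then have "s l = (\<lambda>x. 0)"
      by (simp add: s_def fun_eq_iff)
    then show ?thesis
      by simp
  qed
  moreover have "integrable lborel (\<lambda>x. \<bar>C\<bar> * (dimR n - 2) * W n x powr (p + 1))"
    using assms by (intro integrable_mult_right integrable_W_powr) auto
  moreover have "AE x in lborel. ((\<lambda>l. s l x) \<longlongrightarrow> L * (W n x powr q * LambdaW n x)) at_top"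
  proof (rule AE_I2)
    fix x
    have "\<forall>\<^sub>F l in at_top. f (l * W n x) / l powr q * LambdaW n x = s l x"
      using eventually_gt_at_top[of 0] by eventually_elim (simp add: s_def)
    with tendsto_rescaled_integrand[OF \<open>dimR n > 2\<close> asymp]
    show "((\<lambda>l. s l x) \<longlongrightarrow> L * (W n x powr q * LambdaW n x)) at_top"
      by (rule tendsto_cong[THEN iffD1, rotated])
  qed
  moreover have "\<forall>\<^sub>F l in at_top. AE x in lborel. norm (s l x) \<le> \<bar>C\<bar> * (dimR n - 2) * W n x powr (p + 1)"
    using eventually_ge_at_top[of 1]
    by eventually_elim
      (use abs_rescaled_integrand_le[OF \<open>dimR n > 2\<close> bound _ \<open>0 < p\<close> \<open>p \<le> q\<close>] in \<open>simp add: s_def\<close>)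
  ultimately have "((\<lambda>l. integral\<^sup>L lborel (s l)) \<longlongrightarrow> L * (\<integral>x. W n x powr q * LambdaW n x \<partial>lborel)) at_top"
    by (subst integral_mult_right_zero[symmetric]) (rule integral_dominated_convergence_at_top)
  moreover have "\<forall>\<^sub>F l in at_top. integral\<^sup>L lborel (s l) = (\<integral>x. f (l * W n x) * LambdaW n x \<partial>lborel) / l powr q"
    using eventually_gt_at_top[of 0]
  proof eventually_elim
    case (elim l)
    then have "integral\<^sup>L lborel (s l) = (\<integral>x. f (l * W n x) * LambdaW n x / l powr q \<partial>lborel)"
      by (intro Bochner_Integration.integral_cong) (auto simp: s_def)
    then show ?case
      by simp
  qed
  ultimately show ?thesis
    by (simp add: tendsto_cong)
qed

section \<open>Smooth bumps\<close>

definition bump_profile :: "nat \<Rightarrow> real \<Rightarrow> real" where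
  "bump_profile m s = (if s < 1 then (1/(1-s))^m * exp (-(1/(1-s))) else 0)"

lemma bump_profile_DERIV_less_1:
  assumes s: "s < 1"
  shows "DERIV (bump_profile m) s :> real m * bump_profile (Suc m) s - bump_profile (Suc (Suc m)) s"
proof -
  define F where "F s = (1/(1-s))^m * exp (-(1/(1-s)))" for s :: real
  have "DERIV F s :> real m * bump_profile (Suc m) s - bump_profile (Suc (Suc m)) s"
  proof -
    have ne: "1 - s \<noteq> 0" using s by simp
    define y where "y = 1/(1-s)"
    have y: "y > 0" using s by (simp add: y_def)
    have DG: "DERIV (\<lambda>y. y^m * exp (-y)) y :> (real m * y^(m - 1) * exp (-y) - y^m * exp (-y))"
      by (auto intro!: derivative_eq_intros)
    have Dy: "DERIV (\<lambda>s. 1/(1-s)) s :> y^2"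
      using ne by (auto intro!: derivative_eq_intros simp: y_def power2_eq_square field_simps)
    have "DERIV F s :> (real m * y^(m - 1) * exp (-y) - y^m * exp (-y)) * y^2"
      unfolding F_def using DERIV_chain2[OF DG[unfolded y_def] Dy] by (simp add: y_def)
    moreover have "(real m * y^(m - 1) * exp (-y) - y^m * exp (-y)) * y^2
                   = real m * bump_profile (Suc m) s - bump_profile (Suc (Suc m)) s"
    proof (cases m)
      case 0 then show ?thesis using s by (simp add: bump_profile_def y_def power2_eq_square)
    next
      case (Suc k)
      have "bump_profile (Suc m) s = y^(Suc m) * exp (-y)" "bump_profile (Suc (Suc m)) s = y^(Suc (Suc m)) * exp (-y)"
        using s by (simp_all add: bump_profile_def y_def)
      then show ?thesis using Suc by (simp add: power2_eq_square algebra_simps)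
    qed
    ultimately show ?thesis by simp
  qed
  then show ?thesis
    by (rule has_field_derivative_transform_within_open[where S = "{..<1}"]) (use s in \<open>auto simp: bump_profile_def F_def\<close>)
qed

lemma bump_profile_DERIV_greater_1:
  assumes s: "s > 1"
  shows "DERIV (bump_profile m) s :> real m * bump_profile (Suc m) s - bump_profile (Suc (Suc m)) s"
proof -
  have "DERIV (\<lambda>_. 0) s :> 0" by simp
  then have "DERIV (bump_profile m) s :> 0"
    by (rule has_field_derivative_transform_within_open[where S = "{1<..}"]) (use s in \<open>auto simp: bump_profile_def\<close>)
  then show ?thesis using s by (simp add: bump_profile_def)
qed

lemma bump_profile_DERIV_1: "DERIV (bump_profile m) 1 :> real m * bump_profile (Suc m) 1 - bump_profile (Suc (Suc m)) 1"
proof -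
  have "DERIV (bump_profile m) 1 :> 0"
    unfolding DERIV_def
  proof (rule filterlim_split_at)
    have "\<forall>\<^sub>F h in at_right (0::real). (bump_profile m (1 + h) - bump_profile m 1) / h = 0"
      by (simp add: eventually_at_right_field bump_profile_def) (auto intro: exI[of _ 1])
    then show "((\<lambda>h. (bump_profile m (1 + h) - bump_profile m 1) / h) \<longlongrightarrow> 0) (at_right 0)"
      by (rule tendsto_eventually)
  next
    have lim_z: "LIM h (at_left (0::real)). - inverse h :> at_top"
      using filterlim_inverse_at_bot_neg by (simp add: filterlim_uminus_at_top)
    have "((\<lambda>h. - ((- inverse h) ^ Suc m / exp (- inverse h))) \<longlongrightarrow> - 0) (at_left (0::real))"
      by (intro tendsto_minus filterlim_compose[OF tendsto_power_div_exp_0 lim_z])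
    moreover have "\<forall>\<^sub>F h in at_left (0::real). - ((- inverse h) ^ Suc m / exp (- inverse h)) = (bump_profile m (1 + h) - bump_profile m 1) / h"
    proof -
      have "\<forall>\<^sub>F h in at_left (0::real). h < 0" by (simp add: eventually_at_left_field) (auto intro: exI[of _ "-1"])
      then show ?thesis
      proof eventually_elim
        case (elim h)
        have e1: "1 / (1 - (1 + h)) = - inverse h" by (simp add: divide_inverse)
        have "(bump_profile m (1 + h) - bump_profile m 1) / h = (- inverse h)^m * exp (- (- inverse h)) / h"
          using elim by (simp add: bump_profile_def e1 inverse_eq_divide)
        also have "\<dots> = - ((- inverse h) ^ Suc m / exp (- inverse h))"
          using elim by (simp add: exp_minus field_simps)
        finally show ?case by simp
      qed
    qed
    ultimately show "((\<lambda>h. (bump_profile m (1 + h) - bump_profile m 1) / h) \<longlongrightarrow> 0) (at_left 0)"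
      by (simp add: tendsto_cong)
  qed
  then show ?thesis by (simp add: bump_profile_def)
qed

lemma bump_profile_DERIV: "DERIV (bump_profile m) s :> real m * bump_profile (Suc m) s - bump_profile (Suc (Suc m)) s"
  using bump_profile_DERIV_less_1[of s m] bump_profile_DERIV_greater_1[of s m] bump_profile_DERIV_1[of m]
  by (cases "s < 1"; cases "s > 1") auto

lemma bump_profile_nonneg: "bump_profile m s \<ge> 0"
  by (simp add: bump_profile_def)

lemma bump_profile_0_le_1: "bump_profile 0 s \<le> 1"
  by (simp add: bump_profile_def)

lemma bump_profile_0_pos: "s < 1 \<Longrightarrow> bump_profile 0 s > 0"
  by (simp add: bump_profile_def)

lemma bump_profile_eq_0: "s \<ge> 1 \<Longrightarrow> bump_profile m s = 0"
  by (simp add: bump_profile_def)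

definition radial_bump :: "nat \<Rightarrow> real \<Rightarrow> real^'n::finite \<Rightarrow> real" where
  "radial_bump m a x = bump_profile m (a * (x \<bullet> x))"

lemma radial_bump_nonneg: "radial_bump m a x \<ge> 0"
  by (simp add: radial_bump_def bump_profile_nonneg)

text \<open>Constants and coordinates are needed for closure under partial derivatives: the \<open>i\<close>-th
  partial derivative of a radial bump is \<open>2 a x\<^sub>i\<close> times a combination of radial bumps.\<close>

inductive_set bump_algebra :: "(real^'n::finite \<Rightarrow> real) set" where
  const: "(\<lambda>x. c) \<in> bump_algebra"
| coord: "(\<lambda>x. x $ i) \<in> bump_algebra"
| bump: "radial_bump m a \<in> bump_algebra"
| add: "f \<in> bump_algebra \<Longrightarrow> g \<in> bump_algebra \<Longrightarrow> (\<lambda>x. f x + g x) \<in> bump_algebra"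
| mult: "f \<in> bump_algebra \<Longrightarrow> g \<in> bump_algebra \<Longrightarrow> (\<lambda>x. f x * g x) \<in> bump_algebra"

lemma bump_algebra_cmult: "f \<in> bump_algebra \<Longrightarrow> (\<lambda>x. c * f x) \<in> bump_algebra"
  using bump_algebra.mult[OF bump_algebra.const] by blast

lemma bump_algebra_diff: "f \<in> bump_algebra \<Longrightarrow> g \<in> bump_algebra \<Longrightarrow> (\<lambda>x. f x - g x) \<in> bump_algebra"
  using bump_algebra.add[OF _ bump_algebra_cmult[of g "-1"]] by simp

lemma bump_algebra_has_derivative:
  assumes "f \<in> bump_algebra"
  obtains D where "\<And>x. (f has_derivative D x) (at x)" "\<And>i. (\<lambda>x. D x (axis i 1)) \<in> bump_algebra"
  using assms
proof (induction arbitrary: thesis)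
  case (const c)
  show ?case
    by (rule const.prems[of "\<lambda>x h. 0"]) (auto intro: bump_algebra.const)
next
  case (coord i)
  show ?case
  proof (rule coord.prems[of "\<lambda>x h. h $ i"])
    show "((\<lambda>x. x $ i) has_derivative (\<lambda>h. h $ i)) (at x)" for x :: "real^'a"
      by (rule bounded_linear_imp_has_derivative) (rule bounded_linear_vec_nth)
  qed (auto intro: bump_algebra.const)
next
  case (bump m a)
  define dp where "dp s = real m * bump_profile (Suc m) s - bump_profile (Suc (Suc m)) s" for s
  show ?case
  proof (rule bump.prems[of "\<lambda>x h. a * (h \<bullet> x + x \<bullet> h) * dp (a * (x \<bullet> x))"])
    fix x :: "real^'a"
    have "((\<lambda>x. a * (x \<bullet> x)) has_derivative (\<lambda>h. a * (h \<bullet> x + x \<bullet> h))) (at x)"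
      by (auto intro!: derivative_eq_intros)
    from DERIV_compose_FDERIV[OF bump_profile_DERIV this]
    show "(radial_bump m a has_derivative (\<lambda>h. a * (h \<bullet> x + x \<bullet> h) * dp (a * (x \<bullet> x)))) (at x)"
      unfolding radial_bump_def[abs_def] dp_def .
  next
    fix i
    have "(\<lambda>x::real^'a. (2 * a) * (x $ i * dp (a * (x \<bullet> x)))) \<in> bump_algebra"
      unfolding dp_def radial_bump_def[symmetric]
      by (intro bump_algebra_cmult bump_algebra.mult bump_algebra_diff bump_algebra.coord
          bump_algebra.bump)
    then show "(\<lambda>x. a * (axis i 1 \<bullet> x + x \<bullet> axis i 1) * dp (a * (x \<bullet> x))) \<in> bump_algebra"
      by (simp add: inner_axis inner_axis' mult_ac)
  qed
next
  case (add f g)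
  obtain Df Dg where "\<And>x. (f has_derivative Df x) (at x)" "\<And>i. (\<lambda>x. Df x (axis i 1)) \<in> bump_algebra"
    and "\<And>x. (g has_derivative Dg x) (at x)" "\<And>i. (\<lambda>x. Dg x (axis i 1)) \<in> bump_algebra"
    using add.IH by metis
  then show ?case
    by (intro add.prems[of "\<lambda>x h. Df x h + Dg x h"]) (auto intro!: has_derivative_add bump_algebra.add)
next
  case (mult f g)
  obtain Df Dg where "\<And>x. (f has_derivative Df x) (at x)" "\<And>i. (\<lambda>x. Df x (axis i 1)) \<in> bump_algebra"
    and "\<And>x. (g has_derivative Dg x) (at x)" "\<And>i. (\<lambda>x. Dg x (axis i 1)) \<in> bump_algebra"
    using mult.IH by metis
  then show ?case
    using mult.hyps
    by (intro mult.prems[of "\<lambda>x h. f x * Dg x h + Df x h * g x"])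
      (auto intro!: has_derivative_mult bump_algebra.add bump_algebra.mult)
qed

lemma partial_in_bump_algebra:
  assumes "f \<in> bump_algebra"
  shows "partial i f \<in> bump_algebra"
proof -
  obtain D where D: "\<And>x. (f has_derivative D x) (at x)" "\<And>i. (\<lambda>x. D x (axis i 1)) \<in> bump_algebra"
    using bump_algebra_has_derivative[OF assms] by blast
  have "partial i f = (\<lambda>x. D x (axis i 1))"
  proof
    fix x
    show "partial i f x = D x (axis i 1)"
      unfolding partial_def frechet_derivative_at[OF D(1)[of x], symmetric] ..
  qed
  then show ?thesis
    using D(2) by simp
qed

lemma bump_algebra_differentiable: "f \<in> bump_algebra \<Longrightarrow> f differentiable (at x)"
  by (metis bump_algebra_has_derivative differentiable_def)

lemma bump_algebra_continuous_on: "f \<in> bump_algebra \<Longrightarrow> continuous_on UNIV f"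
  by (intro continuous_at_imp_continuous_on ballI differentiable_imp_continuous_within
      bump_algebra_differentiable)

lemma iter_partial_in_bump_algebra: "f \<in> bump_algebra \<Longrightarrow> iter_partial is f \<in> bump_algebra"
  by (induction "is") (auto intro: partial_in_bump_algebra)

lemma bump_algebra_smooth: "f \<in> bump_algebra \<Longrightarrow> smooth_fun f"
  unfolding smooth_fun_def
  using iter_partial_in_bump_algebra bump_algebra_continuous_on bump_algebra_differentiable by blast

lemma partial_eq_0_if_vanishes_on_open:
  assumes "open S" "x \<in> S" "\<And>y. y \<in> S \<Longrightarrow> f y = 0"
  shows "partial i f x = 0"
proof -
  have "(f has_derivative (\<lambda>h. 0)) (at x)"
    by (rule has_derivative_transform_within_open[OF has_derivative_const assms(1,2)]) (use assms in auto)
  then show ?thesis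
    unfolding partial_def by (simp add: frechet_derivative_at[symmetric])
qed

lemma iter_partial_eq_0_if_vanishes_on_open:
  assumes "open S" "x \<in> S" "\<And>y. y \<in> S \<Longrightarrow> f y = 0"
  shows "iter_partial is f x = 0"
  using assms(2)
proof (induction "is" arbitrary: x)
  case (Cons i "is")
  then show ?case
    using partial_eq_0_if_vanishes_on_open[OF assms(1)] by simp
qed (use assms(3) in simp)

lemma iter_partial_radial_bump_eq_0:
  assumes "a > 0" "norm x > max 1 (1 / a)"
  shows "iter_partial is (radial_bump m a) x = 0"
proof (rule iter_partial_eq_0_if_vanishes_on_open)
  show "open {x::real^'n. a * (x \<bullet> x) > 1}"
    by (intro open_Collect_less continuous_intros)
  show "radial_bump m a y = 0" if "y \<in> {x. a * (x \<bullet> x) > 1}" for y :: "real^'n"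
    using that by (simp add: radial_bump_def bump_profile_eq_0)
  have "norm x \<le> norm x * norm x"
    using assms(2) mult_right_mono[of 1 "norm x" "norm x"] by simp
  also have "\<dots> = x \<bullet> x"
    by (simp add: power2_norm_eq_inner[symmetric] power2_eq_square)
  finally have "norm x \<le> x \<bullet> x" .
  moreover have "a * norm x > 1"
    using assms by (simp add: field_simps)
  ultimately show "x \<in> {x. a * (x \<bullet> x) > 1}"
    using assms(1) by (simp add: order_less_le_trans mult_left_mono)
qed

lemma test_fun_iter_partial_radial_bump:
  assumes "a > 0"
  shows "test_fun (iter_partial is (radial_bump m a :: real^'n::finite \<Rightarrow> real))"
  unfolding test_fun_def
  using bump_algebra_smooth[OF iter_partial_in_bump_algebra[OF bump_algebra.bump]]
    iter_partial_radial_bump_eq_0[OF assms] by blast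

section \<open>Testing the equation against radial bumps\<close>

lemma lborel_integral_scaleR:
  fixes f :: "'a::euclidean_space \<Rightarrow> 'b::{banach, second_countable_topology}"
  assumes c: "c > 0" and f[measurable]: "f \<in> borel_measurable borel"
  shows "(\<integral>x. f (c *\<^sub>R x) \<partial>lborel) = (1 / c ^ DIM('a)) *\<^sub>R (\<integral>x. f x \<partial>lborel)"
proof -
  have L: "lborel = density (distr lborel borel (\<lambda>x::'a. 0 + c *\<^sub>R x)) (\<lambda>_. ennreal (\<bar>c\<bar>^DIM('a)))"
    using lborel_affine[of c "0::'a"] c by simp
  have "(\<integral>x. f x \<partial>lborel) = (\<integral>x. f x \<partial>density (distr lborel borel (\<lambda>x. 0 + c *\<^sub>R x)) (\<lambda>_. ennreal (\<bar>c\<bar>^DIM('a))))"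
    by (subst L) (rule refl)
  also have "\<dots> = (\<integral>x. (\<bar>c\<bar>^DIM('a)) *\<^sub>R f x \<partial>distr lborel borel (\<lambda>x. 0 + c *\<^sub>R x))"
    by (rule integral_density) auto
  also have "\<dots> = (\<integral>x. (\<bar>c\<bar>^DIM('a)) *\<^sub>R f (0 + c *\<^sub>R x) \<partial>lborel)"
    by (rule integral_distr) auto
  also have "\<dots> = (c^DIM('a)) *\<^sub>R (\<integral>x. f (c *\<^sub>R x) \<partial>lborel)" using c by simp
  finally show ?thesis using c by simp
qed

lemma partial_compose_scaleR:
  fixes f :: "real^'n::finite \<Rightarrow> real"
  assumes dif: "\<And>x. f differentiable (at x)"
  shows "partial i (\<lambda>y. f (c *\<^sub>R y)) = (\<lambda>y. c * partial i f (c *\<^sub>R y))"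
proof
  fix y :: "real^'n"
  have Df: "(f has_derivative frechet_derivative f (at (c *\<^sub>R y))) (at (c *\<^sub>R y))"
    using dif by (simp add: frechet_derivative_works)
  have Ds: "((\<lambda>y::real^'n. c *\<^sub>R y) has_derivative (\<lambda>h. c *\<^sub>R h)) (at y)"
    by (auto intro!: derivative_eq_intros)
  have "((\<lambda>y. f (c *\<^sub>R y)) has_derivative (\<lambda>h. frechet_derivative f (at (c *\<^sub>R y)) (c *\<^sub>R h))) (at y)"
    using diff_chain_at[OF Ds Df] by (simp add: o_def)
  then have "frechet_derivative (\<lambda>y. f (c *\<^sub>R y)) (at y) = (\<lambda>h. frechet_derivative f (at (c *\<^sub>R y)) (c *\<^sub>R h))"
    by (simp add: frechet_derivative_at[symmetric])
  moreover have "linear (frechet_derivative f (at (c *\<^sub>R y)))"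
    using Df has_derivative_linear by blast
  ultimately show "partial i (\<lambda>y. f (c *\<^sub>R y)) y = c * partial i f (c *\<^sub>R y)"
    unfolding partial_def by (simp add: linear_cmul)
qed

lemma partial_cmult:
  fixes f :: "real^'n::finite \<Rightarrow> real"
  assumes dif: "\<And>x. f differentiable (at x)"
  shows "partial i (\<lambda>y. k * f y) = (\<lambda>y. k * partial i f y)"
proof
  fix y :: "real^'n"
  have Df: "(f has_derivative frechet_derivative f (at y)) (at y)"
    using dif by (simp add: frechet_derivative_works)
  have "((\<lambda>y. k * f y) has_derivative (\<lambda>h. k * frechet_derivative f (at y) h)) (at y)"
    using has_derivative_mult_right[OF Df] .
  then show "partial i (\<lambda>y. k * f y) y = k * partial i f y"
    unfolding partial_def by (simp add: frechet_derivative_at[symmetric])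
qed

lemma integrable_if_continuous_vanishing_outside:
  fixes f :: "'a::euclidean_space \<Rightarrow> 'b::{banach, second_countable_topology}"
  assumes cont: "continuous_on UNIV f" and supp: "\<And>x. norm x > R \<Longrightarrow> f x = 0"
  shows "integrable lborel f"
proof -
  have "integrable lborel (\<lambda>x. indicator (cball 0 R) x *\<^sub>R f x)"
    by (rule borel_integrable_compact) (use cont in \<open>auto intro: continuous_on_subset\<close>)
  moreover have "(\<lambda>x. indicator (cball 0 R) x *\<^sub>R f x) = f"
    using supp by (auto simp: fun_eq_iff indicator_def not_le)
  ultimately show ?thesis by simp
qed

lemma integrable_mult_iter_partial_radial_bump:
  fixes h :: "real^'n::finite \<Rightarrow> real"
  assumes "continuous_on UNIV h" "a > 0"
  shows "integrable lborel (\<lambda>x. h x * iter_partial is (radial_bump m a) x)"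
proof (rule integrable_if_continuous_vanishing_outside)
  show "continuous_on UNIV (\<lambda>x. h x * iter_partial is (radial_bump m a) x)"
    by (intro continuous_intros assms(1) bump_algebra_continuous_on iter_partial_in_bump_algebra
        bump_algebra.bump)
  show "h x * iter_partial is (radial_bump m a) x = 0" if "max 1 (1 / a) < norm x" for x
    using iter_partial_radial_bump_eq_0[OF assms(2) that] by simp
qed

lemma integrable_mult_radial_bump:
  fixes h :: "real^'n::finite \<Rightarrow> real"
  assumes "continuous_on UNIV h" "a > 0"
  shows "integrable lborel (\<lambda>x. h x * radial_bump m a x)"
  using integrable_mult_iter_partial_radial_bump[OF assms, of "[]"] by simp

lemma integrable_mult_partial_partial_radial_bump:
  fixes h :: "real^'n::finite \<Rightarrow> real"
  assumes "continuous_on UNIV h" "a > 0"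
  shows "integrable lborel (\<lambda>x. h x * partial i (partial i (radial_bump m a)) x)"
  using integrable_mult_iter_partial_radial_bump[OF assms, of "[i, i]"] by simp

lemma integral_grad_dot_grad_radial_bump:
  assumes "u \<in> H1" "a > 0"
  shows "integrable lborel (\<lambda>x. \<Sum>i\<in>UNIV. grad u x $ i * of_real (partial i (radial_bump m a) x))"
    and "(\<integral>x. (\<Sum>i\<in>UNIV. grad u x $ i * of_real (partial i (radial_bump m a) x)) \<partial>lborel)
           = - (\<Sum>i\<in>UNIV. \<integral>x. u x * of_real (partial i (partial i (radial_bump m a)) x) \<partial>lborel)"
proof -
  have wg: "weak_grad u (grad u)"
    using assms(1) unfolding H1_def has_weak_grad_def grad_def by (auto intro: someI[of "weak_grad u"])
  have tf: "test_fun (partial i (radial_bump m a :: real^'a \<Rightarrow> real))" for i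
    using test_fun_iter_partial_radial_bump[OF assms(2), of "[i]"] by simp
  have int: "integrable lborel (\<lambda>x. grad u x $ i * of_real (partial i (radial_bump m a) x))"
    and by_parts: "(\<integral>x. u x * of_real (partial i (partial i (radial_bump m a)) x) \<partial>lborel)
           = - (\<integral>x. grad u x $ i * of_real (partial i (radial_bump m a) x) \<partial>lborel)" for i
    using wg tf[of i] unfolding weak_grad_def by blast+
  show "integrable lborel (\<lambda>x. \<Sum>i\<in>UNIV. grad u x $ i * of_real (partial i (radial_bump m a) x))"
    by (intro Bochner_Integration.integrable_sum int)
  have "(\<integral>x. (\<Sum>i\<in>UNIV. grad u x $ i * of_real (partial i (radial_bump m a) x)) \<partial>lborel)
      = (\<Sum>i\<in>UNIV. \<integral>x. grad u x $ i * of_real (partial i (radial_bump m a) x) \<partial>lborel)"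
    by (rule Bochner_Integration.integral_sum) (rule int)
  also have "\<dots> = (\<Sum>i\<in>UNIV. - (\<integral>x. u x * of_real (partial i (partial i (radial_bump m a)) x) \<partial>lborel))"
    unfolding by_parts by simp
  finally show "(\<integral>x. (\<Sum>i\<in>UNIV. grad u x $ i * of_real (partial i (radial_bump m a) x)) \<partial>lborel)
      = - (\<Sum>i\<in>UNIV. \<integral>x. u x * of_real (partial i (partial i (radial_bump m a)) x) \<partial>lborel)"
    by (simp only: sum_negf)
qed

lemma weak_solution_tested_radial_bump:
  fixes \<Phi> :: "real^'n::finite \<Rightarrow> complex" and f :: "real \<Rightarrow> real" and m :: nat
  assumes ws: "weak_solution n g \<omega> \<Phi>"
    and real: "\<And>x. Im (\<Phi> x) = 0" and pos: "\<And>x. Re (\<Phi> x) > 0"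
    and g: "\<And>t. t > 0 \<Longrightarrow> g (complex_of_real t) = complex_of_real (f t)" and "a > 0"
  defines "R \<equiv> \<lambda>x. Re (\<Phi> x)" and "\<phi> \<equiv> radial_bump m a"
  shows "(\<integral>x. (\<Sum>i\<in>UNIV. grad \<Phi> x $ i * of_real (partial i \<phi> x))
           + complex_of_real (\<omega> * (R x * \<phi> x) - R x powr (4 / (dimR n - 2)) * R x * \<phi> x - f (R x) * \<phi> x)
           \<partial>lborel) = 0"
proof -
  have "test_fun \<phi>"
    using test_fun_iter_partial_radial_bump[OF \<open>a > 0\<close>, of "[]"] by (simp add: \<phi>_def)
  then have "(\<integral>x. (\<Sum>i\<in>UNIV. grad \<Phi> x $ i * of_real (partial i \<phi> x))
      + of_real \<omega> * \<Phi> x * of_real (\<phi> x) - of_real (cmod (\<Phi> x) powr (4 / (dimR n - 2))) * \<Phi> x * of_real (\<phi> x)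
      - g (\<Phi> x) * of_real (\<phi> x) \<partial>lborel) = 0"
    using ws unfolding weak_solution_def by blast
  moreover have "(\<Sum>i\<in>UNIV. grad \<Phi> x $ i * of_real (partial i \<phi> x))
      + of_real \<omega> * \<Phi> x * of_real (\<phi> x) - of_real (cmod (\<Phi> x) powr (4 / (dimR n - 2))) * \<Phi> x * of_real (\<phi> x)
      - g (\<Phi> x) * of_real (\<phi> x)
    = (\<Sum>i\<in>UNIV. grad \<Phi> x $ i * of_real (partial i \<phi> x))
      + complex_of_real (\<omega> * (R x * \<phi> x) - R x powr (4 / (dimR n - 2)) * R x * \<phi> x - f (R x) * \<phi> x)"
    for x
  proof -
    have "\<Phi> x = complex_of_real (R x)" "R x > 0"
      using real[of x] pos[of x] by (simp_all add: R_def complex_eq_iff)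
    then show ?thesis
      using g[of "R x"] by (simp add: algebra_simps)
  qed
  ultimately show ?thesis
    by (simp only:)
qed

lemma tested_equation:
  fixes \<Phi> :: "real^'n::finite \<Rightarrow> complex" and f :: "real \<Rightarrow> real" and m :: nat
  assumes ws: "weak_solution n g \<omega> \<Phi>" and "continuous_on UNIV \<Phi>"
    and real: "\<And>x. Im (\<Phi> x) = 0" and pos: "\<And>x. Re (\<Phi> x) > 0"
    and g: "\<And>t. t > 0 \<Longrightarrow> g (complex_of_real t) = complex_of_real (f t)"
    and "continuous_on {0<..} f" and "a > 0"
  defines "R \<equiv> \<lambda>x. Re (\<Phi> x)" and "\<phi> \<equiv> radial_bump m a"
  shows "\<omega> * (\<integral>x. R x * \<phi> x \<partial>lborel) =
           (\<Sum>i\<in>UNIV. \<integral>x. R x * partial i (partial i \<phi>) x \<partial>lborel)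
           + (\<integral>x. R x powr (4 / (dimR n - 2)) * R x * \<phi> x \<partial>lborel)
           + (\<integral>x. f (R x) * \<phi> x \<partial>lborel)"
proof -
  define e where "e = 4 / (dimR n - 2)"
  have \<Phi>_eq: "\<Phi> = (\<lambda>x. complex_of_real (R x))"
    using real by (simp add: R_def complex_eq_iff fun_eq_iff)
  have cR: "continuous_on UNIV R"
    unfolding R_def by (intro continuous_intros assms(2))
  have cf: "continuous_on UNIV (\<lambda>x. f (R x))"
    by (rule continuous_on_compose2[OF assms(6) cR]) (use pos in \<open>auto simp: R_def\<close>)
  have cRe: "continuous_on UNIV (\<lambda>x. R x powr e * R x)"
    by (intro continuous_intros cR) (metis R_def pos less_irrefl)
  have int_R: "integrable lborel (\<lambda>x. R x * \<phi> x)"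
    and int_Re: "integrable lborel (\<lambda>x. R x powr e * R x * \<phi> x)"
    and int_f: "integrable lborel (\<lambda>x. f (R x) * \<phi> x)"
    unfolding \<phi>_def by (intro integrable_mult_radial_bump cR cRe cf \<open>a > 0\<close>)+
  define F where "F x = \<omega> * (R x * \<phi> x) - R x powr e * R x * \<phi> x - f (R x) * \<phi> x" for x
  define T where "T x = (\<Sum>i\<in>UNIV. grad \<Phi> x $ i * of_real (partial i \<phi> x))" for x
  have "\<Phi> \<in> H1"
    using ws by (simp add: weak_solution_def)
  note grad = integral_grad_dot_grad_radial_bump[OF this \<open>a > 0\<close>, of m, folded \<phi>_def]
  have "(\<integral>x. T x + complex_of_real (F x) \<partial>lborel) = 0"
    using weak_solution_tested_radial_bump[OF ws real pos g \<open>a > 0\<close>, of m]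
    by (simp only: T_def F_def R_def \<phi>_def e_def)
  moreover have "integrable lborel F"
    unfolding F_def using int_R int_Re int_f by (intro Bochner_Integration.integrable_diff) auto
  moreover have "integrable lborel T"
    unfolding T_def by (rule grad(1))
  ultimately have "(\<integral>x. T x \<partial>lborel) + complex_of_real (\<integral>x. F x \<partial>lborel) = 0"
    by (simp add: Bochner_Integration.integral_add)
  moreover have "(\<integral>x. T x \<partial>lborel) = - complex_of_real (\<Sum>i\<in>UNIV. \<integral>x. R x * partial i (partial i \<phi>) x \<partial>lborel)"
    unfolding T_def grad(2) by (simp add: \<Phi>_eq flip: of_real_mult)
  ultimately have "Re (- complex_of_real (\<Sum>i\<in>UNIV. \<integral>x. R x * partial i (partial i \<phi>) x \<partial>lborel)
      + complex_of_real (\<integral>x. F x \<partial>lborel)) = 0"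
    by simp
  then have "(\<integral>x. F x \<partial>lborel) = (\<Sum>i\<in>UNIV. \<integral>x. R x * partial i (partial i \<phi>) x \<partial>lborel)"
    by simp
  moreover have "(\<integral>x. F x \<partial>lborel) = \<omega> * (\<integral>x. R x * \<phi> x \<partial>lborel)
      - (\<integral>x. R x powr e * R x * \<phi> x \<partial>lborel) - (\<integral>x. f (R x) * \<phi> x \<partial>lborel)"
    unfolding F_def using int_R int_Re int_f by simp
  ultimately show ?thesis
    unfolding e_def by linarith
qed

lemma integral_le_const_mult_integral:
  fixes f h :: "'a \<Rightarrow> real"
  assumes "integrable M f" "integrable M h" "\<And>x. f x \<le> K * h x"
  shows "integral\<^sup>L M f \<le> K * integral\<^sup>L M h"
  using integral_mono[OF assms(1) integrable_mult_right[OF assms(2)] assms(3)] by simp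

lemma integral_comp_mult_radial_bump_le:
  fixes R :: "real^'n::finite \<Rightarrow> real" and h :: "real \<Rightarrow> real"
  assumes "continuous_on UNIV R" "continuous_on UNIV (\<lambda>x. h (R x))" "a > 0"
    and "\<And>x. 0 < R x \<and> R x \<le> M" and "\<And>r. 0 < r \<Longrightarrow> r \<le> M \<Longrightarrow> h r \<le> K * r"
  shows "(\<integral>x. h (R x) * radial_bump m a x \<partial>lborel) \<le> K * (\<integral>x. R x * radial_bump m a x \<partial>lborel)"
proof (rule integral_le_const_mult_integral)
  show "integrable lborel (\<lambda>x. h (R x) * radial_bump m a x)" "integrable lborel (\<lambda>x. R x * radial_bump m a x)"
    using assms(1-3) by (auto intro: integrable_mult_radial_bump)
  show "h (R x) * radial_bump m a x \<le> K * (R x * radial_bump m a x)" for x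
    using mult_right_mono[OF assms(5) radial_bump_nonneg, of "R x" m a x] assms(4)[of x]
    by (simp add: mult.assoc)
qed

lemma integral_mult_partial_partial_radial_bump_le:
  fixes R :: "real^'n::finite \<Rightarrow> real"
  assumes "continuous_on UNIV R" "a > 0" "\<And>x. 0 < R x \<and> R x \<le> M"
  shows "(\<integral>x. R x * partial i (partial i (radial_bump m a)) x \<partial>lborel)
           \<le> M * (\<integral>x. \<bar>partial i (partial i (radial_bump m a)) x\<bar> \<partial>lborel)"
proof (rule integral_le_const_mult_integral)
  show "integrable lborel (\<lambda>x. R x * partial i (partial i (radial_bump m a)) x)"
    by (intro integrable_mult_partial_partial_radial_bump assms(1,2))
  show "integrable lborel (\<lambda>x. \<bar>partial i (partial i (radial_bump m a)) x\<bar>)"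
    using integrable_mult_partial_partial_radial_bump[OF continuous_on_const \<open>a > 0\<close>, of 1 i m] by simp
  show "R x * partial i (partial i (radial_bump m a)) x \<le> M * \<bar>partial i (partial i (radial_bump m a)) x\<bar>" for x
    using assms(3)[of x] by (smt (verit) abs_ge_self abs_mult_pos mult_right_mono mult_left_mono)
qed

lemma tested_equation_le:
  fixes \<Phi> :: "real^'n::finite \<Rightarrow> complex" and f :: "real \<Rightarrow> real" and m :: nat
  assumes ws: "weak_solution n g \<omega> \<Phi>" and cont: "continuous_on UNIV \<Phi>"
    and real: "\<And>x. Im (\<Phi> x) = 0" and pos: "\<And>x. Re (\<Phi> x) > 0" and le_M: "\<And>x. Re (\<Phi> x) \<le> M"
    and g: "\<And>t. t > 0 \<Longrightarrow> g (complex_of_real t) = complex_of_real (f t)"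
    and cf: "continuous_on {0<..} f" and mono: "\<And>s t. 0 < s \<Longrightarrow> s \<le> t \<Longrightarrow> f s / s \<le> f t / t"
    and "dimR n > 2" "a > 0"
  defines "R \<equiv> \<lambda>x. Re (\<Phi> x)" and "\<phi> \<equiv> radial_bump m a"
  shows "(\<omega> - (M powr (4 / (dimR n - 2)) + f M / M)) * (\<integral>x. R x * \<phi> x \<partial>lborel)
           \<le> M * (\<Sum>i\<in>UNIV. \<integral>x. \<bar>partial i (partial i \<phi>) x\<bar> \<partial>lborel)"
proof -
  define e where "e = 4 / (dimR n - 2)"
  have "e > 0"
    using \<open>dimR n > 2\<close> by (simp add: e_def)
  have R: "0 < R x \<and> R x \<le> M" for x
    using pos le_M by (auto simp: R_def)
  have cR: "continuous_on UNIV R"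
    unfolding R_def by (intro continuous_intros cont)
  have "(\<Sum>i\<in>UNIV. \<integral>x. R x * partial i (partial i \<phi>) x \<partial>lborel)
      \<le> M * (\<Sum>i\<in>UNIV. \<integral>x. \<bar>partial i (partial i \<phi>) x\<bar> \<partial>lborel)"
    unfolding sum_distrib_left \<phi>_def
    by (intro sum_mono integral_mult_partial_partial_radial_bump_le cR \<open>a > 0\<close> R)
  moreover have "(\<integral>x. R x powr e * R x * \<phi> x \<partial>lborel) \<le> M powr e * (\<integral>x. R x * \<phi> x \<partial>lborel)"
    unfolding \<phi>_def
  proof (intro integral_comp_mult_radial_bump_le[where h = "\<lambda>r. r powr e * r"] cR \<open>a > 0\<close> R)
    show "continuous_on UNIV (\<lambda>x. R x powr e * R x)"
      by (intro continuous_intros cR) (metis R less_irrefl)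
    show "r powr e * r \<le> M powr e * r" if "0 < r" "r \<le> M" for r
      using that \<open>e > 0\<close> by (intro mult_right_mono powr_mono2) auto
  qed (rule R)
  moreover have "(\<integral>x. f (R x) * \<phi> x \<partial>lborel) \<le> (f M / M) * (\<integral>x. R x * \<phi> x \<partial>lborel)"
    unfolding \<phi>_def
  proof (intro integral_comp_mult_radial_bump_le cR \<open>a > 0\<close> R)
    show "continuous_on UNIV (\<lambda>x. f (R x))"
      by (rule continuous_on_compose2[OF cf cR]) (use R in auto)
    show "f r \<le> f M / M * r" if "0 < r" "r \<le> M" for r
      using mono[OF that] that by (simp add: divide_le_eq mult.commute)
  qed (rule R)
  moreover have "\<omega> * (\<integral>x. R x * \<phi> x \<partial>lborel) =
      (\<Sum>i\<in>UNIV. \<integral>x. R x * partial i (partial i \<phi>) x \<partial>lborel)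
      + (\<integral>x. R x powr e * R x * \<phi> x \<partial>lborel) + (\<integral>x. f (R x) * \<phi> x \<partial>lborel)"
    using tested_equation[OF ws cont real pos g cf \<open>a > 0\<close>, of m] by (simp add: R_def \<phi>_def e_def)
  ultimately show ?thesis
    unfolding e_def[symmetric] left_diff_distrib distrib_right by linarith
qed

lemma radial_bump_scale: "radial_bump m (c * c) y = radial_bump m 1 (c *\<^sub>R y)"
  by (simp add: radial_bump_def algebra_simps)

lemma partial_partial_radial_bump_scale:
  "partial i (partial i (radial_bump m (c * c))) y
     = c\<^sup>2 * partial i (partial i (radial_bump m 1)) (c *\<^sub>R (y :: real^'n::finite))"
proof -
  define \<psi> where "\<psi> = (radial_bump m 1 :: real^'n \<Rightarrow> real)"
  have \<psi>: "\<psi> \<in> bump_algebra" "partial i \<psi> \<in> bump_algebra"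
    unfolding \<psi>_def by (auto intro: partial_in_bump_algebra bump_algebra.bump)
  have "radial_bump m (c * c) = (\<lambda>y. \<psi> (c *\<^sub>R y))"
    by (simp add: \<psi>_def radial_bump_scale fun_eq_iff)
  then have first: "partial i (radial_bump m (c * c)) = (\<lambda>y. c * partial i \<psi> (c *\<^sub>R y))"
    using partial_compose_scaleR[OF bump_algebra_differentiable[OF \<psi>(1)]] by simp
  have "(\<lambda>y. partial i \<psi> (c *\<^sub>R y)) differentiable (at x)" for x :: "real^'n"
    using differentiable_chain_at[of "\<lambda>y. c *\<^sub>R y" x "partial i \<psi>"] bump_algebra_differentiable[OF \<psi>(2)]
    by (simp add: o_def)
  then have "partial i (partial i (radial_bump m (c * c))) = (\<lambda>y. c * partial i (\<lambda>y. partial i \<psi> (c *\<^sub>R y)) y)"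
    unfolding first by (rule partial_cmult)
  also have "\<dots> = (\<lambda>y. c * (c * partial i (partial i \<psi>) (c *\<^sub>R y)))"
    using partial_compose_scaleR[OF bump_algebra_differentiable[OF \<psi>(2)]] by simp
  finally show ?thesis
    by (simp add: \<psi>_def power2_eq_square fun_eq_iff)
qed

lemma rescaled_tested_equation_le:
  fixes \<Phi> :: "real^'n::finite \<Rightarrow> complex" and f :: "real \<Rightarrow> real" and m :: nat
  assumes ws: "weak_solution n g \<omega> \<Phi>" and cont: "continuous_on UNIV \<Phi>"
    and real: "\<And>x. Im (\<Phi> x) = 0" and pos: "\<And>x. Re (\<Phi> x) > 0" and le_M: "\<And>x. Re (\<Phi> x) \<le> M"
    and g: "\<And>t. t > 0 \<Longrightarrow> g (complex_of_real t) = complex_of_real (f t)"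
    and cf: "continuous_on {0<..} f" and mono: "\<And>s t. 0 < s \<Longrightarrow> s \<le> t \<Longrightarrow> f s / s \<le> f t / t"
    and "dimR n > 2" "c > 0"
  shows "(\<omega> - (M powr (4 / (dimR n - 2)) + f M / M)) * (\<integral>x. Re (\<Phi> ((1 / c) *\<^sub>R x)) * radial_bump m 1 x \<partial>lborel)
           \<le> M * c\<^sup>2 * (\<Sum>i\<in>UNIV. \<integral>x. \<bar>partial i (partial i (radial_bump m 1 :: real^'n \<Rightarrow> real)) x\<bar> \<partial>lborel)"
    (is "?lhs \<le> M * c\<^sup>2 * ?S")
proof -
  define \<psi> where "\<psi> = (radial_bump m 1 :: real^'n \<Rightarrow> real)"
  define K where "K = 1 / c ^ DIM(real^'n)"
  have "K > 0"
    using \<open>c > 0\<close> by (simp add: K_def)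
  have \<psi>: "\<psi> \<in> bump_algebra"
    unfolding \<psi>_def by (rule bump_algebra.bump)
  have "(\<integral>x. \<bar>partial i (partial i (radial_bump m (c * c))) x\<bar> \<partial>lborel)
      = c\<^sup>2 * (K * (\<integral>x. \<bar>partial i (partial i \<psi>) x\<bar> \<partial>lborel))" for i
  proof -
    have "continuous_on UNIV (partial i (partial i \<psi>))"
      by (intro bump_algebra_continuous_on partial_in_bump_algebra \<psi>)
    then have "(\<lambda>x. \<bar>partial i (partial i \<psi>) x\<bar>) \<in> borel_measurable borel"
      by (intro borel_measurable_continuous_onI continuous_intros)
    from lborel_integral_scaleR[OF \<open>c > 0\<close> this] \<open>c > 0\<close> show ?thesis
      by (simp add: partial_partial_radial_bump_scale \<psi>_def K_def abs_mult)
  qed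
  moreover have "(\<integral>x. Re (\<Phi> x) * radial_bump m (c * c) x \<partial>lborel)
      = K * (\<integral>x. Re (\<Phi> ((1 / c) *\<^sub>R x)) * \<psi> x \<partial>lborel)"
  proof -
    have "continuous_on UNIV (\<lambda>x. Re (\<Phi> ((1 / c) *\<^sub>R x)) * \<psi> x)"
      by (intro continuous_intros continuous_on_compose2[OF cont] bump_algebra_continuous_on[OF \<psi>]) auto
    then have "(\<lambda>x. Re (\<Phi> ((1 / c) *\<^sub>R x)) * \<psi> x) \<in> borel_measurable borel"
      by (rule borel_measurable_continuous_onI)
    from lborel_integral_scaleR[OF \<open>c > 0\<close> this] \<open>c > 0\<close> show ?thesis
      by (simp add: radial_bump_scale \<psi>_def K_def)
  qed
  ultimately have "K * ?lhs \<le> K * (M * c\<^sup>2 * ?S)"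
    using tested_equation_le[OF assms(1-9), of "c * c" m] \<open>c > 0\<close>
    by (simp add: \<psi>_def sum_distrib_left mult_ac)
  then show ?thesis
    using \<open>K > 0\<close> by simp
qed

section \<open>Growth of the scaling parameter\<close>

lemma Tscale_Tscale:
  assumes "\<mu> > 0" "M > 0"
  shows "Tscale n \<mu> (Tscale n M v) x = v (((\<mu> * M) powr (- 2 / (dimR n - 2))) *\<^sub>R x) / complex_of_real (\<mu> * M)"
  unfolding Tscale_def using assms by (simp add: powr_mult mult.commute)

lemma zeta_eq:
  assumes "\<mu> \<omega> > 0" "peak (\<Phi> \<omega>) > 0"
  shows "zeta n \<Phi> \<mu> \<omega> x = \<Phi> \<omega> (((\<mu> \<omega> * peak (\<Phi> \<omega>)) powr (- 2 / (dimR n - 2))) *\<^sub>R x)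
           / complex_of_real (\<mu> \<omega> * peak (\<Phi> \<omega>)) - complex_of_real (W n x)"
  unfolding zeta_def Tscale_Tscale[OF assms] ..

lemma continuous_on_zeta:
  assumes "continuous_on UNIV (\<Phi> \<omega>)" "\<mu> \<omega> > 0" "peak (\<Phi> \<omega>) > 0" "dimR n > 2"
  shows "continuous_on UNIV (zeta n \<Phi> \<mu> \<omega>)"
proof -
  have "continuous_on UNIV (\<lambda>x. \<Phi> \<omega> (((\<mu> \<omega> * peak (\<Phi> \<omega>)) powr (- 2 / (dimR n - 2))) *\<^sub>R x))"
    by (rule continuous_on_compose2[OF assms(1)]) (auto intro!: continuous_intros)
  then show ?thesis
    using assms continuous_on_W[OF assms(4)]
    unfolding zeta_eq[where \<mu> = \<mu> and \<Phi> = \<Phi>, OF assms(2,3), abs_def] by (intro continuous_intros) auto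
qed

lemma Re_rescaled_eq_zeta:
  assumes "\<mu> \<omega> > 0" "peak (\<Phi> \<omega>) > 0"
  defines "l \<equiv> \<mu> \<omega> * peak (\<Phi> \<omega>)"
  shows "Re (\<Phi> \<omega> ((l powr (- 2 / (dimR n - 2))) *\<^sub>R x)) = l * (W n x + Re (zeta n \<Phi> \<mu> \<omega> x))"
proof -
  have "l > 0"
    using assms by (simp add: l_def)
  then have "\<Phi> \<omega> ((l powr (- 2 / (dimR n - 2))) *\<^sub>R x) = complex_of_real l * (zeta n \<Phi> \<mu> \<omega> x + complex_of_real (W n x))"
    unfolding zeta_eq[where \<mu> = \<mu> and \<Phi> = \<Phi>, OF assms(1,2)] l_def[symmetric] by (simp add: field_simps)
  then show ?thesis
    by simp
qed

lemma integral_pos_if_pos_on_ball: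
  fixes f :: "'a::euclidean_space \<Rightarrow> real"
  assumes "integrable lborel f" "\<And>x. f x \<ge> 0" "\<And>x. x \<in> ball 0 1 \<Longrightarrow> f x > 0"
  shows "(\<integral>x. f x \<partial>lborel) > 0"
proof -
  have "(\<integral>x. f x \<partial>lborel) \<noteq> 0"
  proof
    assume "(\<integral>x. f x \<partial>lborel) = 0"
    then have "AE x in lborel. f x = 0"
      using integral_nonneg_eq_0_iff_AE[OF assms(1)] assms(2) by simp
    then have "AE x in lborel. x \<notin> ball (0::'a) 1"
      by eventually_elim (use assms(3) in force)
    then have "emeasure lborel (ball (0::'a) 1) = 0"
      by (subst (asm) AE_iff_measurable[where N = "ball 0 1"]) auto
    then show False
      using content_ball_pos[of 1 "0::'a"] by (simp add: measure_def)
  qed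
  moreover have "(\<integral>x. f x \<partial>lborel) \<ge> 0"
    using assms(2) by simp
  ultimately show ?thesis
    by simp
qed

lemma integral_W_mult_radial_bump_pos:
  assumes "dimR n > 2"
  shows "(\<integral>x. W n x * radial_bump 0 1 x \<partial>lborel) > 0"
proof (rule integral_pos_if_pos_on_ball)
  show "integrable lborel (\<lambda>x. W n x * radial_bump 0 1 x)"
    by (intro integrable_mult_radial_bump continuous_on_W assms) simp
  show "0 \<le> W n x * radial_bump 0 1 x" for x
    using W_pos[OF assms, of x] by (simp add: radial_bump_nonneg)
  fix x :: "real^'a" assume "x \<in> ball 0 1"
  then have "x \<bullet> x < 1"
    by (simp add: power2_norm_eq_inner[symmetric] abs_square_less_1)
  then show "0 < W n x * radial_bump 0 1 x"
    using W_pos[OF assms, of x] by (simp add: radial_bump_def bump_profile_0_pos)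
qed

lemma le_add_power_div_cube:
  fixes t \<epsilon> :: real
  assumes "t \<ge> 0" "\<epsilon> > 0"
  shows "t \<le> \<epsilon> + t powr 4 / \<epsilon> ^ 3"
proof (cases "t \<le> \<epsilon>")
  case False
  then have "t * \<epsilon> ^ 3 \<le> t * t ^ 3"
    using assms by (intro mult_left_mono power_mono) auto
  also have "\<dots> = t powr 4"
    using False assms by (simp add: powr_realpow eval_nat_numeral)
  finally show ?thesis
    using assms by (simp add: le_divide_eq add_increasing)
qed (use assms in \<open>simp add: add_increasing2\<close>)

lemma integral_norm_mult_radial_bump_le:
  fixes z :: "real^'n::finite \<Rightarrow> complex"
  assumes "continuous_on UNIV z" "\<epsilon> > 0" "Lp_norm_pow 4 z \<le> ennreal \<eta>" "\<eta> \<ge> 0"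
  shows "(\<integral>x. cmod (z x) * radial_bump 0 1 x \<partial>lborel)
           \<le> \<epsilon> * (\<integral>x. radial_bump 0 1 (x :: real^'n) \<partial>lborel) + \<eta> / \<epsilon> ^ 3"
proof -
  define \<psi> where "\<psi> = (radial_bump 0 1 :: real^'n \<Rightarrow> real)"
  have \<psi>: "0 \<le> \<psi> x" "\<psi> x \<le> 1" for x
    by (simp_all add: \<psi>_def radial_bump_def bump_profile_nonneg bump_profile_0_le_1)
  have c1: "continuous_on UNIV (\<lambda>x. cmod (z x))"
    by (intro continuous_intros assms(1))
  have c4: "continuous_on UNIV (\<lambda>x. cmod (z x) powr 4)"
    by (rule continuous_on_powr'[OF c1 continuous_on_const]) auto
  have int_\<psi>: "integrable lborel \<psi>"
    using integrable_mult_radial_bump[OF continuous_on_const, of 1 1 0] by (simp add: \<psi>_def)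
  have int_4: "integrable lborel (\<lambda>x. cmod (z x) powr 4 * \<psi> x)"
    unfolding \<psi>_def by (intro integrable_mult_radial_bump c4) simp
  have "(\<integral>x. cmod (z x) * \<psi> x \<partial>lborel) \<le> (\<integral>x. \<epsilon> * \<psi> x + cmod (z x) powr 4 * \<psi> x / \<epsilon> ^ 3 \<partial>lborel)"
  proof (rule integral_mono)
    show "integrable lborel (\<lambda>x. cmod (z x) * \<psi> x)"
      unfolding \<psi>_def by (intro integrable_mult_radial_bump c1) simp
    show "integrable lborel (\<lambda>x. \<epsilon> * \<psi> x + cmod (z x) powr 4 * \<psi> x / \<epsilon> ^ 3)"
      by (intro Bochner_Integration.integrable_add integrable_mult_right integrable_divide int_\<psi> int_4)
    show "cmod (z x) * \<psi> x \<le> \<epsilon> * \<psi> x + cmod (z x) powr 4 * \<psi> x / \<epsilon> ^ 3" for x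
      using mult_right_mono[OF le_add_power_div_cube[OF norm_ge_zero \<open>\<epsilon> > 0\<close>] \<psi>(1), of "z x" x]
      by (simp add: algebra_simps)
  qed
  also have "\<dots> = \<epsilon> * (\<integral>x. \<psi> x \<partial>lborel) + (\<integral>x. cmod (z x) powr 4 * \<psi> x \<partial>lborel) / \<epsilon> ^ 3"
    using int_\<psi> int_4 by simp
  also have "(\<integral>x. cmod (z x) powr 4 * \<psi> x \<partial>lborel) \<le> \<eta>"
  proof -
    have "(\<integral>\<^sup>+x. ennreal (cmod (z x) powr 4 * \<psi> x) \<partial>lborel) \<le> Lp_norm_pow 4 z"
      unfolding Lp_norm_pow_def
      by (intro nn_integral_mono ennreal_leI) (use \<psi> in \<open>simp add: mult_left_le\<close>)
    then have "(\<integral>\<^sup>+x. ennreal (cmod (z x) powr 4 * \<psi> x) \<partial>lborel) \<le> ennreal \<eta>"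
      using assms(3) by order
    moreover have "(\<integral>x. cmod (z x) powr 4 * \<psi> x \<partial>lborel)
        = enn2real (\<integral>\<^sup>+x. ennreal (cmod (z x) powr 4 * \<psi> x) \<partial>lborel)"
      using \<psi> by (intro integral_eq_nn_integral borel_measurable_integrable[OF int_4]) auto
    ultimately show ?thesis
      using \<open>\<eta> \<ge> 0\<close> by (simp add: enn2real_leI)
  qed
  finally show ?thesis
    using \<open>\<epsilon> > 0\<close> by (simp add: \<psi>_def divide_right_mono)
qed

lemma tendsto_integral_norm_mult_radial_bump:
  fixes \<zeta> :: "real \<Rightarrow> real^'n::finite \<Rightarrow> complex"
  assumes cont: "\<forall>\<^sub>F \<omega> in at_top. continuous_on UNIV (\<zeta> \<omega>)"
    and L4: "((\<lambda>\<omega>. Lp_norm_pow 4 (\<zeta> \<omega>)) \<longlongrightarrow> 0) at_top"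
  shows "((\<lambda>\<omega>. \<integral>x. cmod (\<zeta> \<omega> x) * radial_bump 0 1 x \<partial>lborel) \<longlongrightarrow> 0) at_top"
  unfolding tendsto_iff
proof (intro allI impI)
  fix \<delta> :: real assume "\<delta> > 0"
  define P where "P = (\<integral>x. radial_bump 0 1 (x :: real^'n) \<partial>lborel)"
  have "P \<ge> 0"
    unfolding P_def by (simp add: radial_bump_nonneg)
  define \<epsilon> where "\<epsilon> = \<delta> / (2 * (P + 1))"
  define \<eta> where "\<eta> = \<epsilon> ^ 3 * \<delta> / 4"
  have "\<epsilon> > 0" "\<eta> > 0"
    using \<open>\<delta> > 0\<close> \<open>P \<ge> 0\<close> by (simp_all add: \<epsilon>_def \<eta>_def)
  have "\<epsilon> * P = \<delta> / 2 * (P / (P + 1))"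
    using \<open>P \<ge> 0\<close> by (simp add: \<epsilon>_def field_simps)
  also have "\<dots> < \<delta> / 2"
    using \<open>\<delta> > 0\<close> \<open>P \<ge> 0\<close> by (simp add: field_simps)
  finally have "\<epsilon> * P + \<eta> / \<epsilon> ^ 3 < \<delta>"
    using \<open>\<epsilon> > 0\<close> \<open>\<delta> > 0\<close> by (simp add: \<eta>_def)
  have "\<forall>\<^sub>F \<omega> in at_top. Lp_norm_pow 4 (\<zeta> \<omega>) < ennreal \<eta>"
    using order_tendstoD(2)[OF L4, of "ennreal \<eta>"] \<open>\<eta> > 0\<close> by simp
  then show "\<forall>\<^sub>F \<omega> in at_top. dist (\<integral>x. cmod (\<zeta> \<omega> x) * radial_bump 0 1 x \<partial>lborel) 0 < \<delta>"
    using cont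
  proof eventually_elim
    case (elim \<omega>)
    have "(\<integral>x. cmod (\<zeta> \<omega> x) * radial_bump 0 1 x \<partial>lborel) \<le> \<epsilon> * P + \<eta> / \<epsilon> ^ 3"
      unfolding P_def using elim \<open>\<epsilon> > 0\<close> \<open>\<eta> > 0\<close>
      by (intro integral_norm_mult_radial_bump_le) auto
    moreover have "(\<integral>x. cmod (\<zeta> \<omega> x) * radial_bump 0 1 x \<partial>lborel) \<ge> 0"
      by (simp add: radial_bump_nonneg)
    ultimately show ?case
      using \<open>\<epsilon> * P + \<eta> / \<epsilon> ^ 3 < \<delta>\<close> by (simp add: dist_real_def)
  qed
qed

lemma integral_W_plus_Re_mult_radial_bump_ge:
  fixes z :: "real^'n::finite \<Rightarrow> complex"
  assumes "dimR n > 2" "continuous_on UNIV z"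
    and small: "(\<integral>x. cmod (z x) * radial_bump 0 1 x \<partial>lborel) < (\<integral>x. W n x * radial_bump 0 1 x \<partial>lborel) / 2"
  shows "(\<integral>x. (W n x + Re (z x)) * radial_bump 0 1 x \<partial>lborel) \<ge> (\<integral>x. W n x * radial_bump 0 1 x \<partial>lborel) / 2"
proof -
  have int_W: "integrable lborel (\<lambda>x. W n x * radial_bump 0 1 x)"
    by (intro integrable_mult_radial_bump continuous_on_W assms(1)) simp
  have int_Re: "integrable lborel (\<lambda>x. Re (z x) * radial_bump 0 1 x)"
    by (intro integrable_mult_radial_bump continuous_intros assms(2)) simp
  have "(\<integral>x. - (cmod (z x) * radial_bump 0 1 x) \<partial>lborel) \<le> (\<integral>x. Re (z x) * radial_bump 0 1 x \<partial>lborel)"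
  proof (rule integral_mono[OF _ int_Re])
    show "integrable lborel (\<lambda>x. - (cmod (z x) * radial_bump 0 1 x))"
      by (intro integrable_minus integrable_mult_radial_bump continuous_intros assms(2)) simp
    show "- (cmod (z x) * radial_bump 0 1 x) \<le> Re (z x) * radial_bump 0 1 x" for x
      using mult_right_mono[of "- cmod (z x)" "Re (z x)" "radial_bump 0 1 x"] abs_Re_le_cmod[of "z x"]
      by (simp add: radial_bump_nonneg)
  qed
  then show ?thesis
    using small int_W int_Re by (simp add: distrib_right)
qed

lemma integral_rescaled_mult_radial_bump_ge:
  fixes \<Phi> :: "real \<Rightarrow> real^'n::finite \<Rightarrow> complex"
  assumes "dimR n > 2" "continuous_on UNIV (\<Phi> \<omega>)" "\<mu> \<omega> > 0" "peak (\<Phi> \<omega>) > 0"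
    and small: "(\<integral>x. cmod (zeta n \<Phi> \<mu> \<omega> x) * radial_bump 0 1 x \<partial>lborel)
      < (\<integral>x. W n x * radial_bump 0 1 x \<partial>lborel) / 2"
  defines "l \<equiv> \<mu> \<omega> * peak (\<Phi> \<omega>)"
  shows "(\<integral>x. Re (\<Phi> \<omega> ((l powr (- 2 / (dimR n - 2))) *\<^sub>R x)) * radial_bump 0 1 x \<partial>lborel)
           \<ge> l * ((\<integral>x. W n x * radial_bump 0 1 x \<partial>lborel) / 2)"
proof -
  have "l > 0"
    using assms by (simp add: l_def)
  have "(\<integral>x. Re (\<Phi> \<omega> ((l powr (- 2 / (dimR n - 2))) *\<^sub>R x)) * radial_bump 0 1 x \<partial>lborel)
      = l * (\<integral>x. (W n x + Re (zeta n \<Phi> \<mu> \<omega> x)) * radial_bump 0 1 x \<partial>lborel)"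
    unfolding l_def Re_rescaled_eq_zeta[where \<Phi> = \<Phi> and \<mu> = \<mu>, OF assms(3,4)] by (simp add: mult.assoc)
  also have "\<dots> \<ge> l * ((\<integral>x. W n x * radial_bump 0 1 x \<partial>lborel) / 2)"
    using integral_W_plus_Re_mult_radial_bump_ge[OF assms(1)
        continuous_on_zeta[where \<Phi> = \<Phi> and \<mu> = \<mu>, OF assms(2-4,1)] small] \<open>l > 0\<close>
    by simp
  finally show ?thesis .
qed

lemma tested_bound_arith:
  fixes \<omega> A X M c S I \<mu> B :: real
  assumes "(\<omega> - A) * X \<le> M * c\<^sup>2 * S" "X \<ge> \<mu> * M * (I / 2)"
    and "\<mu> > 1/2" "M > 0" "I > 0" "S \<ge> 0" "c\<^sup>2 \<le> B"
  shows "\<omega> - A \<le> 4 * B * S / I"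
proof (cases "\<omega> \<le> A")
  case False
  then have "(\<omega> - A) * (\<mu> * M * (I / 2)) \<le> M * c\<^sup>2 * S"
    using assms(1,2) by (smt (verit) mult_left_mono)
  then have "\<omega> - A \<le> M * c\<^sup>2 * S / (\<mu> * M * (I / 2))"
    using assms(3-5) by (simp add: le_divide_eq)
  also have "\<dots> = (2 * c\<^sup>2 * S / I) * (1 / \<mu>)"
    using \<open>M > 0\<close> by (simp add: field_simps)
  also have "\<dots> \<le> (2 * c\<^sup>2 * S / I) * 2"
    using assms(3,5,6) by (intro mult_left_mono) (auto simp: field_simps)
  also have "\<dots> \<le> 4 * B * S / I"
    using assms(5-7) by (simp add: divide_right_mono mult_right_mono)
  finally show ?thesis .
next
  case True
  moreover have "4 * B * S / I \<ge> 0"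
    using assms(5-7) by (smt (verit) divide_nonneg_pos mult_nonneg_nonneg zero_le_power2)
  ultimately show ?thesis
    by linarith
qed

lemma omega_le_if_scale_le:
  fixes \<Phi> :: "real \<Rightarrow> real^'n::finite \<Rightarrow> complex" and f :: "real \<Rightarrow> real"
  assumes "dimR n > 2"
    and ws: "weak_solution n g \<omega> (\<Phi> \<omega>)" and cont: "continuous_on UNIV (\<Phi> \<omega>)"
    and real: "\<And>x. Im (\<Phi> \<omega> x) = 0" and pos: "\<And>x. Re (\<Phi> \<omega> x) > 0"
    and decr: "\<And>x y. norm x < norm y \<Longrightarrow> Re (\<Phi> \<omega> y) < Re (\<Phi> \<omega> x)"
    and g: "\<And>t. t > 0 \<Longrightarrow> g (complex_of_real t) = complex_of_real (f t)"
    and cf: "continuous_on {0<..} f" and mono: "\<And>s t. 0 < s \<Longrightarrow> s \<le> t \<Longrightarrow> f s / s \<le> f t / t"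
    and mu: "\<mu> \<omega> > 1/2"
    and small: "(\<integral>x. cmod (zeta n \<Phi> \<mu> \<omega> x) * radial_bump 0 1 x \<partial>lborel)
      < (\<integral>x. W n x * radial_bump 0 1 x \<partial>lborel) / 2"
    and scale: "\<mu> \<omega> * peak (\<Phi> \<omega>) < K"
  defines "I \<equiv> \<integral>x. W n x * radial_bump 0 1 x \<partial>lborel"
    and "S \<equiv> \<Sum>i\<in>UNIV. \<integral>x. \<bar>partial i (partial i (radial_bump 0 1 :: real^'n \<Rightarrow> real)) x\<bar> \<partial>lborel"
  shows "\<omega> \<le> (2 * K) powr (4 / (dimR n - 2)) + f (2 * K) / (2 * K) + 4 * K powr (4 / (dimR n - 2)) * S / I"
proof -
  define e where "e = 4 / (dimR n - 2)"
  define M where "M = peak (\<Phi> \<omega>)"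
  define l where "l = \<mu> \<omega> * M"
  define c where "c = l powr (2 / (dimR n - 2))"
  have "e > 0" "I > 0" "S \<ge> 0"
    using \<open>dimR n > 2\<close> integral_W_mult_radial_bump_pos[OF \<open>dimR n > 2\<close>]
    by (auto simp: e_def I_def S_def intro: sum_nonneg)
  have "M > 0" "l > 0" "c > 0"
    using pos[of 0] mu by (simp_all add: M_def l_def c_def peak_def)
  have le_M: "Re (\<Phi> \<omega> x) \<le> M" for x
    using decr[of 0 x] by (cases "x = 0") (auto simp: M_def peak_def)
  have "M / 2 < \<mu> \<omega> * M"
    using mult_strict_right_mono[OF mu \<open>M > 0\<close>] by simp
  then have "M \<le> 2 * K"
    using scale unfolding M_def[symmetric] by linarith
  then have "M powr e + f M / M \<le> (2 * K) powr e + f (2 * K) / (2 * K)"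
    using \<open>M > 0\<close> \<open>e > 0\<close> mono[of M "2 * K"] powr_mono2[of e M "2 * K"] by simp
  moreover have "\<omega> - (M powr e + f M / M) \<le> 4 * K powr e * S / I"
  proof (rule tested_bound_arith)
    have "1 / c = l powr (- 2 / (dimR n - 2))"
      using \<open>l > 0\<close> by (simp add: c_def powr_minus_divide)
    then show "(\<integral>x. Re (\<Phi> \<omega> ((1 / c) *\<^sub>R x)) * radial_bump 0 1 x \<partial>lborel) \<ge> \<mu> \<omega> * M * (I / 2)"
      using integral_rescaled_mult_radial_bump_ge[OF \<open>dimR n > 2\<close> cont _ _ small] mu \<open>M > 0\<close>
      by (simp add: l_def M_def I_def)
    show "(\<omega> - (M powr e + f M / M)) * (\<integral>x. Re (\<Phi> \<omega> ((1 / c) *\<^sub>R x)) * radial_bump 0 1 x \<partial>lborel)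
        \<le> M * c\<^sup>2 * S"
      using rescaled_tested_equation_le[OF ws cont real pos le_M g cf mono \<open>dimR n > 2\<close> \<open>c > 0\<close>, of 0]
      unfolding S_def e_def .
    have "c\<^sup>2 = l powr e"
      using \<open>l > 0\<close> by (simp add: c_def e_def powr_powr powr_realpow[symmetric])
    also have "\<dots> \<le> K powr e"
      using \<open>l > 0\<close> \<open>e > 0\<close> scale by (intro powr_mono2) (auto simp: l_def M_def)
    finally show "c\<^sup>2 \<le> K powr e" .
  qed (use mu \<open>M > 0\<close> \<open>I > 0\<close> \<open>S \<ge> 0\<close> in auto)
  ultimately show ?thesis
    unfolding e_def by linarith
qed

lemma filterlim_scale_at_top:
  fixes \<Phi> :: "real \<Rightarrow> real^'n::finite \<Rightarrow> complex" and f :: "real \<Rightarrow> real"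
  assumes "dimR n > 2"
    and gs: "\<And>\<omega>. \<omega> > 0 \<Longrightarrow> weak_solution n g \<omega> (\<Phi> \<omega>) \<and> continuous_on UNIV (\<Phi> \<omega>) \<and>
              (\<forall>x. Im (\<Phi> \<omega> x) = 0 \<and> Re (\<Phi> \<omega> x) > 0) \<and>
              (\<forall>x y. norm x < norm y \<longrightarrow> Re (\<Phi> \<omega> y) < Re (\<Phi> \<omega> x))"
    and g: "\<And>t. t > 0 \<Longrightarrow> g (complex_of_real t) = complex_of_real (f t)"
    and cf: "continuous_on {0<..} f" and mono: "\<And>s t. 0 < s \<Longrightarrow> s \<le> t \<Longrightarrow> f s / s \<le> f t / t"
    and \<mu>_lim: "(\<mu> \<longlongrightarrow> 1) at_top"
    and L4: "((\<lambda>\<omega>. Lp_norm_pow 4 (zeta n \<Phi> \<mu> \<omega>)) \<longlongrightarrow> 0) at_top"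
  shows "filterlim (\<lambda>\<omega>. \<mu> \<omega> * peak (\<Phi> \<omega>)) at_top at_top"
  unfolding filterlim_at_top
proof
  fix Z :: real
  define I where "I = (\<integral>x. W n x * radial_bump 0 1 x \<partial>lborel)"
  define S where "S = (\<Sum>i\<in>UNIV. \<integral>x. \<bar>partial i (partial i (radial_bump 0 1 :: real^'n \<Rightarrow> real)) x\<bar> \<partial>lborel)"
  define B where "B = (2 * Z) powr (4 / (dimR n - 2)) + f (2 * Z) / (2 * Z) + 4 * Z powr (4 / (dimR n - 2)) * S / I"
  have "I > 0"
    unfolding I_def by (rule integral_W_mult_radial_bump_pos[OF \<open>dimR n > 2\<close>])
  have \<mu>_half: "\<forall>\<^sub>F \<omega> in at_top. \<mu> \<omega> > 1/2"
    using order_tendstoD(1)[OF \<mu>_lim, of "1/2"] by simp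
  have "\<forall>\<^sub>F \<omega> in at_top. continuous_on UNIV (zeta n \<Phi> \<mu> \<omega>)"
    using \<mu>_half eventually_gt_at_top[of 0]
  proof eventually_elim
    case (elim \<omega>)
    then show ?case
      using gs[of \<omega>] by (intro continuous_on_zeta \<open>dimR n > 2\<close>) (auto simp: peak_def)
  qed
  from order_tendstoD(2)[OF tendsto_integral_norm_mult_radial_bump[OF this L4], of "I / 2"]
  have "\<forall>\<^sub>F \<omega> in at_top. (\<integral>x. cmod (zeta n \<Phi> \<mu> \<omega> x) * radial_bump 0 1 x \<partial>lborel) < I / 2"
    using \<open>I > 0\<close> by simp
  then show "\<forall>\<^sub>F \<omega> in at_top. Z \<le> \<mu> \<omega> * peak (\<Phi> \<omega>)"
    using \<mu>_half eventually_gt_at_top[of "max 0 B"]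
  proof eventually_elim
    case (elim \<omega>)
    then have "\<omega> > 0"
      by simp
    show ?case
    proof (rule ccontr)
      assume "\<not> Z \<le> \<mu> \<omega> * peak (\<Phi> \<omega>)"
      then have "\<omega> \<le> B"
        unfolding B_def S_def I_def
        using gs[OF \<open>\<omega> > 0\<close>] elim(1,2)
        by (intro omega_le_if_scale_le[OF \<open>dimR n > 2\<close> _ _ _ _ _ g cf mono])
          (auto simp: I_def)
      then show False
        using elim(3) by simp
    qed
  qed
qed

section \<open>The limit of the nonlinear coefficient\<close>

lemma rinner_of_real:
  "rinner (\<lambda>x. complex_of_real (f x)) (\<lambda>x. complex_of_real (h x)) = (\<integral>x. f x * h x \<partial>lborel)"
  unfolding rinner_def by (simp flip: of_real_mult)

lemma assumptions_g_tendsto_integral_rescaled: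
  assumes g: "assumptions_g n g p1 p2 C1 C2 C3" and "dimR n > 2"
  shows "((\<lambda>l. (\<integral>x. g_real g (l * W n x) * LambdaW n x \<partial>lborel) / l powr p2) \<longlongrightarrow>
           C2 / p2 * (\<integral>x. W n x powr p2 * LambdaW n x \<partial>lborel)) at_top"
proof -
  obtain C where "\<And>t. t > 0 \<Longrightarrow> \<bar>g_real g t\<bar> \<le> C * (t powr p1 + t powr p2)"
    using assumptions_g_growth[OF assms] by blast
  then show ?thesis
    using assumptions_g_exponents[OF assms]
    by (intro tendsto_integral_rescaled_nonlinearity[OF \<open>dimR n > 2\<close> assumptions_g_continuous[OF g]
        _ assumptions_g_tendsto[OF assms]]) auto
qed

lemma kappa_eq_integral:
  assumes "assumptions_g n g p1 p2 C1 C2 C3" "dimR n > 2" "\<mu> \<omega> * peak (\<Phi> \<omega>) > 0"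
  shows "kappa n g \<Phi> \<mu> \<omega> = - (\<integral>x. g_real g (\<mu> \<omega> * peak (\<Phi> \<omega>) * W n x) * LambdaW n x \<partial>lborel)"
  unfolding kappa_def
  using assumptions_g_of_real[OF assms(1) mult_pos_pos[OF assms(3) W_pos[OF assms(2)]]]
  by (simp add: rinner_of_real)

theorem lemma4p7:
  fixes n :: "'n::finite itself"
    and g :: "complex \<Rightarrow> complex"
    and p1 p2 C1 C2 C3 :: real
    and \<Phi> :: "real \<Rightarrow> real^'n \<Rightarrow> complex"
    and \<omega>1 :: real
    and \<mu> :: "real \<Rightarrow> real"
  assumes dim: "CARD('n) = 3 \<or> CARD('n) = 4"
    and g_ass: "assumptions_g n g p1 p2 C1 C2 C3"
    and gs: "\<And>\<omega>. \<omega> > 0 \<Longrightarrow>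
              ground_state n g \<omega> (\<Phi> \<omega>) \<and> weak_solution n g \<omega> (\<Phi> \<omega>) \<and>
              continuous_on UNIV (\<Phi> \<omega>) \<and>
              (\<forall>x. Im (\<Phi> \<omega> x) = 0 \<and> Re (\<Phi> \<omega> x) > 0) \<and>
              (\<forall>x y. norm x = norm y \<longrightarrow> \<Phi> \<omega> x = \<Phi> \<omega> y) \<and>
              (\<forall>x y. norm x < norm y \<longrightarrow> Re (\<Phi> \<omega> y) < Re (\<Phi> \<omega> x))"
    and \<omega>1_pos: "\<omega>1 > 0"
    and \<mu>_pos: "\<And>\<omega>. \<omega> > \<omega>1 \<Longrightarrow> \<mu> \<omega> > 0"
    and \<mu>_lim: "(\<mu> \<longlongrightarrow> 1) at_top"
    and orth: "\<And>\<omega>. \<omega> > \<omega>1 \<Longrightarrow>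
              rinner (\<lambda>x. zeta n \<Phi> \<mu> \<omega> x
                          + resolvent (s_par n \<Phi> \<mu> \<omega>) (\<lambda>y. of_real (Vpot n y) * zeta n \<Phi> \<mu> \<omega> y) x)
                     (\<lambda>x. complex_of_real (Vpot n x * LambdaW n x)) = 0"
    and grad_ex: "\<forall>\<^sub>F \<omega> in at_top. has_weak_grad (zeta n \<Phi> \<mu> \<omega>)"
    and grad_to0: "((\<lambda>\<omega>. grad_norm2_enn (zeta n \<Phi> \<mu> \<omega>)) \<longlongrightarrow> 0) at_top"
    and Lr_to0: "\<And>r. dimR n / (dimR n - 2) < r \<Longrightarrow>
                   ((\<lambda>\<omega>. Lp_norm_pow r (zeta n \<Phi> \<mu> \<omega>)) \<longlongrightarrow> 0) at_top"
  shows "((\<lambda>\<omega>. kappa n g \<Phi> \<mu> \<omega> / (\<mu> \<omega> * peak (\<Phi> \<omega>)) powr p2) \<longlongrightarrow>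
            - (C2 / p2) * rinner (\<lambda>x. complex_of_real (W n x powr p2))
                                 (\<lambda>x. complex_of_real (LambdaW n x))) at_top"
proof -
  have d: "dimR n > 2"
    using dim by (auto simp: dimR_def)
  have "dimR n / (dimR n - 2) < 4"
    using dim by (auto simp: dimR_def)
  moreover have "\<And>\<omega>. \<omega> > 0 \<Longrightarrow> weak_solution n g \<omega> (\<Phi> \<omega>) \<and> continuous_on UNIV (\<Phi> \<omega>) \<and>
      (\<forall>x. Im (\<Phi> \<omega> x) = 0 \<and> Re (\<Phi> \<omega> x) > 0) \<and> (\<forall>x y. norm x < norm y \<longrightarrow> Re (\<Phi> \<omega> y) < Re (\<Phi> \<omega> x))"
    using gs by blast
  ultimately have scale: "filterlim (\<lambda>\<omega>. \<mu> \<omega> * peak (\<Phi> \<omega>)) at_top at_top"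
    using filterlim_scale_at_top[OF d _ assumptions_g_of_real[OF g_ass] assumptions_g_continuous[OF g_ass]
        assumptions_g_ratio_mono[OF g_ass] \<mu>_lim Lr_to0] by blast
  from tendsto_minus[OF filterlim_compose[OF assumptions_g_tendsto_integral_rescaled[OF g_ass d] scale]]
  have "((\<lambda>\<omega>. - ((\<integral>x. g_real g (\<mu> \<omega> * peak (\<Phi> \<omega>) * W n x) * LambdaW n x \<partial>lborel)
      / (\<mu> \<omega> * peak (\<Phi> \<omega>)) powr p2)) \<longlongrightarrow> - (C2 / p2 * (\<integral>x. W n x powr p2 * LambdaW n x \<partial>lborel))) at_top"
    by simp
  moreover have "\<forall>\<^sub>F \<omega> in at_top. - ((\<integral>x. g_real g (\<mu> \<omega> * peak (\<Phi> \<omega>) * W n x) * LambdaW n x \<partial>lborel)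
      / (\<mu> \<omega> * peak (\<Phi> \<omega>)) powr p2) = kappa n g \<Phi> \<mu> \<omega> / (\<mu> \<omega> * peak (\<Phi> \<omega>)) powr p2"
    using filterlim_at_top_dense[THEN iffD1, OF scale, rule_format, of 0]
    by eventually_elim (simp add: kappa_eq_integral[OF g_ass d])
  ultimately show ?thesis
    by (simp add: tendsto_cong rinner_of_real)
qed

end
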